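(* Let $J$ satisfy hypothesis (H) below, let $D\subset\mathbb{R}^N$ be a bounded set, $\Omega\subset D$ a bounded open set and $\Omega_n\subset D$ a sequence of bounded open sets with $|\Omega\setminus\Omega_n|+|\Omega_n\setminus\Omega|\to0$ as $n\to\infty$. Then, if $\tilde\mu(\Omega)$ is an eigenvalue of $\tilde{\mathcal{J}}_\Omega$, there exists a family of eigenvalues $\tilde\mu(\Omega_n)\in\sigma(\tilde{\mathcal{J}}_{\Omega_n})$ such that $\tilde\mu(\Omega_n)\to\tilde\mu(\Omega)$ as $n\to\infty$.
   Context: Hypothesis (H): $J\in\mathcal{C}(\mathbb{R}^N,\mathbb{R})$ is nonnegative, spherically symmetric and radially decreasing, with $J(0)>0$ and $\int_{\mathbb{R}^N}J=1$. For a bounded open $U\subset D$, $\tilde{\mathcal{J}}_U:L^2(D)\to L^2(D)$ is $\tilde{\mathcal{J}}_U u(x)=\int_U J(x-y)u(y)\,dy$ for $x\in U$ and $0$ for $x\in D\setminus U$. $|\cdot|$ is Lebesgue measure. *)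

theory Defs
  imports "HOL-Analysis.Analysis"
begin

text \<open>Elements of L2(D): Lebesgue measurable on D and square integrable on D
  (functions are identified when they agree a.e. on D; all statements below are
  invariant under such changes).\<close>
definition sq_int :: "'a::euclidean_space set \<Rightarrow> ('a \<Rightarrow> real) \<Rightarrow> bool" where
  "sq_int D u \<longleftrightarrow> set_borel_measurable lebesgue D u \<and>
     set_integrable lebesgue D (\<lambda>x. (u x)^2)"

definition Jop :: "('a::euclidean_space \<Rightarrow> real) \<Rightarrow> 'a set \<Rightarrow> ('a \<Rightarrow> real) \<Rightarrow> 'a \<Rightarrow> real" where
  "Jop J U u x = (if x \<in> U then (LINT y:U|lebesgue. J (x - y) * u y) else 0)"

definition is_eigenvalue ::
  "('a::euclidean_space \<Rightarrow> real) \<Rightarrow> 'a set \<Rightarrow> 'a set \<Rightarrow> real \<Rightarrow> bool" where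
  "is_eigenvalue J U D \<mu> \<longleftrightarrow>
     (\<exists>u. sq_int D u \<and> \<not> (AE x in lebesgue. x \<in> D \<longrightarrow> u x = 0) \<and>
          (AE x in lebesgue. x \<in> D \<longrightarrow> Jop J U u x = \<mu> * u x))"

text \<open>mu is in the spectrum of the bounded operator J_U on L2(D): J_U - mu I is not
  bijective on L2(D) (by the open mapping theorem, equivalent to having no bounded inverse).\<close>
definition in_spectrum ::
  "('a::euclidean_space \<Rightarrow> real) \<Rightarrow> 'a set \<Rightarrow> 'a set \<Rightarrow> real \<Rightarrow> bool" where
  "in_spectrum J U D \<mu> \<longleftrightarrow> \<not> (
     (\<forall>f. sq_int D f \<longrightarrow>
        (\<exists>u. sq_int D u \<and> (AE x in lebesgue. x \<in> D \<longrightarrow> Jop J U u x - \<mu> * u x = f x))) \<and>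
     (\<forall>u. sq_int D u \<and> (AE x in lebesgue. x \<in> D \<longrightarrow> Jop J U u x = \<mu> * u x) \<longrightarrow>
        (AE x in lebesgue. x \<in> D \<longrightarrow> u x = 0)))"

end

theory Submission
  imports Defs "HOL-Complex_Analysis.Great_Picard"
begin

text \<open>
  The operator
  \<open>J\<^sub>U\<close> is symmetric, and it maps \<open>L\<^sup>2\<close>-bounded sets to uniformly bounded equicontinuous
  families; by Arzela-Ascoli, \<open>J\<^sub>U - t\<close> is therefore bounded below whenever \<open>t \<noteq> 0\<close>
  is not an eigenvalue. Since \<open>J\<^sub>U u\<close> is always bounded while \<open>L\<^sup>2(U)\<close> contains
  essentially unbounded functions, \<open>0\<close> is always a spectral value. Hence, if no spectral
  value lies in \<open>(\<mu> - r, \<mu> + r)\<close>, the resolvent \<open>R\<^sub>t\<close> exists and is bounded for every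
  \<open>t\<close> in this interval, and \<open>g(t) = \<langle>R\<^sub>t f, f\<rangle>\<close> satisfies the Riccati inequality
  \<open>g' = \<parallel>R\<^sub>t f\<parallel>\<^sup>2 \<ge> g\<^sup>2 / \<parallel>f\<parallel>\<^sup>2\<close>. This forces \<open>\<bar>g(\<mu>)\<bar> \<le> \<parallel>f\<parallel>\<^sup>2 / r\<close>, and
  polarisation gives \<open>\<parallel>(J\<^sub>U - \<mu>) v\<parallel> \<ge> r \<parallel>v\<parallel>\<close>. For an eigenfunction \<open>v\<close> of
  \<open>J\<^sub>\<Omega>\<close> with eigenvalue \<open>\<mu>\<close> we have
  \<open>\<parallel>(J\<^sub>\<Omega>\<^sub>n - \<mu>) v\<parallel>\<^sup>2 = \<parallel>(J\<^sub>\<Omega>\<^sub>n - J\<^sub>\<Omega>) v\<parallel>\<^sup>2 \<le> C \<bar>\<Omega> \<triangle> \<Omega>\<^sub>n\<bar> \<longrightarrow> 0\<close>,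
  which produces spectral values of \<open>J\<^sub>\<Omega>\<^sub>n\<close> converging to \<open>\<mu>\<close>.
\<close>

lemma convergent_selection:
  fixes \<mu> :: real and d :: "nat \<Rightarrow> real"
  assumes d: "d \<longlonglongrightarrow> 0" and near: "\<And>n r. d n < r \<Longrightarrow> 0 < r \<Longrightarrow> \<exists>t. \<bar>t - \<mu>\<bar> < r \<and> S n t"
  shows "\<exists>x. (\<forall>n. S n (x n)) \<and> x \<longlonglongrightarrow> \<mu>"
proof -
  define r where "r n = \<bar>d n\<bar> + 1 / real (Suc n)" for n
  have "d n < r n" for n
    unfolding r_def by (rule order.strict_trans1[OF abs_ge_self]) simp
  moreover have "0 < r n" for n
    unfolding r_def by (intro add_nonneg_pos) auto
  ultimately have "\<exists>t. \<bar>t - \<mu>\<bar> < r n \<and> S n t" for n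
    by (intro near)
  then obtain x where x: "\<And>n. \<bar>x n - \<mu>\<bar> < r n" "\<And>n. S n (x n)" by metis
  have "r \<longlonglongrightarrow> 0 + 0"
    unfolding r_def by (intro tendsto_add LIMSEQ_Suc[OF lim_inverse_n']) (use tendsto_rabs_zero[OF d] in simp)
  then have "r \<longlonglongrightarrow> 0" by simp
  then have "(\<lambda>n. x n - \<mu>) \<longlonglongrightarrow> 0"
    by (rule Lim_null_comparison[rotated]) (use x(1) in \<open>auto intro!: always_eventually less_imp_le\<close>)
  then show ?thesis using x(2) LIM_zero_iff by blast
qed

section \<open>Square-integrable functions vanishing outside a set\<close>

lemma sigma_finite_lebesgue: "sigma_finite_measure (lebesgue :: 'a::euclidean_space measure)"
proof
  show "\<exists>A. countable A \<and> A \<subseteq> sets (lebesgue::'a measure) \<and> \<Union> A = space lebesgue \<and>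
      (\<forall>a\<in>A. emeasure lebesgue a \<noteq> \<infinity>)"
  proof (intro exI[of _ "range (\<lambda>n::nat. cball (0::'a) (real n))"] conjI ballI)
    show "\<Union> (range (\<lambda>n::nat. cball (0::'a) (real n))) = space lebesgue"
      by (auto simp: real_arch_simple)
    fix a assume "a \<in> range (\<lambda>n::nat. cball (0::'a) (real n))"
    then show "emeasure lebesgue a \<noteq> \<infinity>"
      using bounded_set_imp_lmeasurable[of a] by (auto simp: fmeasurable_def)
  qed auto
qed

interpretation lebesgue_pair: pair_sigma_finite "lebesgue :: 'a::euclidean_space measure" lebesgue
  by (simp add: pair_sigma_finite_def sigma_finite_lebesgue)

lemma measurable_lebesgue_if_borel:
  "f \<in> borel_measurable borel \<Longrightarrow> f \<in> borel_measurable (lebesgue :: 'a::euclidean_space measure)"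
  by (rule measurable_completion) simp

lemma measurable_fst_lebesgue [measurable]:
  "fst \<in> borel_measurable ((lebesgue :: 'a::euclidean_space measure) \<Otimes>\<^sub>M (lebesgue :: 'a measure))"
  by (rule measurable_compose[OF measurable_fst measurable_completion]) simp

lemma measurable_snd_lebesgue [measurable]:
  "snd \<in> borel_measurable ((lebesgue :: 'a::euclidean_space measure) \<Otimes>\<^sub>M (lebesgue :: 'a measure))"
  by (rule measurable_compose[OF measurable_snd measurable_completion]) simp

lemma abs_le_1_plus_square: "\<bar>a::real\<bar> \<le> 1 + a\<^sup>2"
proof (cases "\<bar>a\<bar> \<le> 1")
  case True then show ?thesis using zero_le_power2[of a] by linarith
next
  case False
  have "\<bar>a\<bar> * 1 \<le> \<bar>a\<bar> * \<bar>a\<bar>" by (rule mult_left_mono) (use False in auto)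
  then show ?thesis by (simp add: power2_eq_square)
qed

lemma abs_mult_le_sum_squares: "\<bar>a * b::real\<bar> \<le> a\<^sup>2 + b\<^sup>2"
proof -
  have "0 \<le> (\<bar>a\<bar> - \<bar>b\<bar>)\<^sup>2" by simp
  then have "2 * \<bar>a * b\<bar> \<le> a\<^sup>2 + b\<^sup>2" by (simp add: power2_diff abs_mult)
  then show ?thesis by simp
qed

lemma square_add_le: "((a::real) + b)\<^sup>2 \<le> 2 * a\<^sup>2 + 2 * b\<^sup>2"
proof -
  have "0 \<le> (a - b)\<^sup>2" by simp
  then show ?thesis by (simp add: power2_eq_square algebra_simps)
qed

text \<open>Elements of \<open>L\<^sup>2(D)\<close> are represented by functions on the whole space that vanish
  outside \<open>D\<close>, so that all integrals can be taken over \<^const>\<open>lebesgue\<close>.\<close>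

definition in_L2 :: "'a::euclidean_space set \<Rightarrow> ('a \<Rightarrow> real) \<Rightarrow> bool" where
  "in_L2 D u \<longleftrightarrow> u \<in> borel_measurable lebesgue \<and> integrable lebesgue (\<lambda>x. (u x)\<^sup>2) \<and>
     (\<forall>x. x \<notin> D \<longrightarrow> u x = 0)"

definition L2_inner :: "('a::euclidean_space \<Rightarrow> real) \<Rightarrow> ('a \<Rightarrow> real) \<Rightarrow> real" where
  "L2_inner u v = (\<integral>x. u x * v x \<partial>lebesgue)"

abbreviation L2_sqnorm :: "('a::euclidean_space \<Rightarrow> real) \<Rightarrow> real" where
  "L2_sqnorm u \<equiv> L2_inner u u"

definition L1_norm :: "('a::euclidean_space \<Rightarrow> real) \<Rightarrow> real" where
  "L1_norm u = (\<integral>x. \<bar>u x\<bar> \<partial>lebesgue)"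

lemma in_L2_measurable: "in_L2 D u \<Longrightarrow> u \<in> borel_measurable lebesgue"
  by (simp add: in_L2_def)

lemma in_L2_integrable_square: "in_L2 D u \<Longrightarrow> integrable lebesgue (\<lambda>x. (u x)\<^sup>2)"
  by (simp add: in_L2_def)

lemma in_L2_outside: "in_L2 D u \<Longrightarrow> x \<notin> D \<Longrightarrow> u x = 0"
  by (simp add: in_L2_def)

lemma in_L2_integrable_mult:
  assumes "in_L2 D u" "in_L2 D v"
  shows "integrable lebesgue (\<lambda>x. u x * v x)"
proof (rule Bochner_Integration.integrable_bound)
  show "integrable lebesgue (\<lambda>x. (u x)\<^sup>2 + (v x)\<^sup>2)"
    using in_L2_integrable_square[OF assms(1)] in_L2_integrable_square[OF assms(2)] by auto
  show "(\<lambda>x. u x * v x) \<in> borel_measurable lebesgue"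
    using in_L2_measurable[OF assms(1)] in_L2_measurable[OF assms(2)] by measurable
  show "AE x in lebesgue. norm (u x * v x) \<le> norm ((u x)\<^sup>2 + (v x)\<^sup>2)"
    using abs_mult_le_sum_squares by auto
qed

lemma in_L2_lincomb:
  assumes "in_L2 D u" "in_L2 D v"
  shows "in_L2 D (\<lambda>x. a * u x + b * v x)"
  unfolding in_L2_def
proof (intro conjI)
  show "(\<lambda>x. a * u x + b * v x) \<in> borel_measurable lebesgue"
    using in_L2_measurable[OF assms(1)] in_L2_measurable[OF assms(2)] by measurable
  have "integrable lebesgue (\<lambda>x. a\<^sup>2 * (u x)\<^sup>2 + 2*a*b * (u x * v x) + b\<^sup>2 * (v x)\<^sup>2)"
    using in_L2_integrable_square[OF assms(1)] in_L2_integrable_square[OF assms(2)]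
      in_L2_integrable_mult[OF assms] by auto
  then show "integrable lebesgue (\<lambda>x. (a * u x + b * v x)\<^sup>2)"
    by (simp add: power2_eq_square algebra_simps)
  show "\<forall>x. x \<notin> D \<longrightarrow> a * u x + b * v x = 0"
    using in_L2_outside[OF assms(1)] in_L2_outside[OF assms(2)] by simp
qed

lemma in_L2_scale: "in_L2 D u \<Longrightarrow> in_L2 D (\<lambda>x. a * u x)"
  using in_L2_lincomb[of D u u a 0] by simp

lemma in_L2_diff: "in_L2 D u \<Longrightarrow> in_L2 D v \<Longrightarrow> in_L2 D (\<lambda>x. u x - v x)"
  using in_L2_lincomb[of D u v 1 "-1"] by simp

lemma in_L2_abs: "in_L2 D u \<Longrightarrow> in_L2 D (\<lambda>x. \<bar>u x\<bar>)"
  unfolding in_L2_def by (auto simp: power2_abs)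

lemma sq_int_imp_in_L2:
  assumes "sq_int D u"
  shows "in_L2 D (\<lambda>x. indicator D x * u x)"
proof -
  have "(\<lambda>x. indicator D x * u x) \<in> borel_measurable lebesgue"
    using assms unfolding sq_int_def set_borel_measurable_def by simp
  moreover have "integrable lebesgue (\<lambda>x. indicator D x * (u x)\<^sup>2)"
    using assms unfolding sq_int_def set_integrable_def by simp
  moreover have "(\<lambda>x. (indicator D x * u x)\<^sup>2) = (\<lambda>x. indicator D x * (u x)\<^sup>2)"
    by (auto simp: indicator_def)
  ultimately show ?thesis unfolding in_L2_def by (auto simp: indicator_def)
qed

lemma in_L2_imp_sq_int:
  assumes "in_L2 D f"
  shows "sq_int D f"
proof -
  have "(\<lambda>x. indicator D x *\<^sub>R f x) = f" "(\<lambda>x. indicator D x *\<^sub>R (f x)\<^sup>2) = (\<lambda>x. (f x)\<^sup>2)"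
    using in_L2_outside[OF assms] by (auto simp: indicator_def fun_eq_iff)
  then show ?thesis unfolding sq_int_def set_borel_measurable_def set_integrable_def
    using in_L2_measurable[OF assms] in_L2_integrable_square[OF assms] by simp
qed

lemma L2_inner_commute: "L2_inner u v = L2_inner v u"
  unfolding L2_inner_def by (simp add: mult.commute)

lemma L2_inner_lincomb_left:
  assumes "in_L2 D u" "in_L2 D v" "in_L2 D w"
  shows "L2_inner (\<lambda>x. a * u x + b * v x) w = a * L2_inner u w + b * L2_inner v w"
proof -
  have "L2_inner (\<lambda>x. a * u x + b * v x) w = (\<integral>x. a * (u x * w x) + b * (v x * w x) \<partial>lebesgue)"
    unfolding L2_inner_def by (simp add: algebra_simps)
  then show ?thesis
    unfolding L2_inner_def
    using in_L2_integrable_mult[OF assms(1,3)] in_L2_integrable_mult[OF assms(2,3)] by simp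
qed

lemma L2_inner_lincomb_right:
  assumes "in_L2 D u" "in_L2 D v" "in_L2 D w"
  shows "L2_inner w (\<lambda>x. a * u x + b * v x) = a * L2_inner w u + b * L2_inner w v"
  using L2_inner_lincomb_left[OF assms] by (simp add: L2_inner_commute)

lemma L2_inner_cong_AE:
  assumes "AE x in lebesgue. u x = u' x" "AE x in lebesgue. v x = v' x"
    and "in_L2 D u" "in_L2 D u'" "in_L2 D v" "in_L2 D v'"
  shows "L2_inner u v = L2_inner u' v'"
  unfolding L2_inner_def using assms(1,2) in_L2_measurable[OF assms(3)]
    in_L2_measurable[OF assms(4)] in_L2_measurable[OF assms(5)] in_L2_measurable[OF assms(6)]
  by (intro integral_cong_AE) auto

lemma L2_sqnorm_cong_AE:
  "AE x in lebesgue. u x = u' x \<Longrightarrow> in_L2 D u \<Longrightarrow> in_L2 D u' \<Longrightarrow> L2_sqnorm u = L2_sqnorm u'"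
  by (rule L2_inner_cong_AE) auto

lemma L2_sqnorm_nonneg: "L2_sqnorm u \<ge> 0"
  unfolding L2_inner_def by (intro integral_nonneg_AE) auto

lemma L2_sqnorm_scale: "L2_sqnorm (\<lambda>x. a * u x) = a\<^sup>2 * L2_sqnorm u"
  unfolding L2_inner_def by (simp add: power2_eq_square algebra_simps)

lemma L2_sqnorm_abs: "L2_sqnorm (\<lambda>x. \<bar>u x\<bar>) = L2_sqnorm u"
  unfolding L2_inner_def by simp

lemma L2_sqnorm_diff_commute: "L2_sqnorm (\<lambda>x. u x - v x) = L2_sqnorm (\<lambda>x. v x - u x)"
  unfolding L2_inner_def by (simp add: algebra_simps)

lemma L2_sqnorm_eq_0_iff:
  assumes "in_L2 D u"
  shows "L2_sqnorm u = 0 \<longleftrightarrow> (AE x in lebesgue. u x = 0)"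
proof -
  have "L2_sqnorm u = (\<integral>x. (u x)\<^sup>2 \<partial>lebesgue)"
    unfolding L2_inner_def by (simp add: power2_eq_square)
  moreover have "(\<integral>x. (u x)\<^sup>2 \<partial>lebesgue) = 0 \<longleftrightarrow> (AE x in lebesgue. (u x)\<^sup>2 = 0)"
    by (rule integral_nonneg_eq_0_iff_AE) (use in_L2_integrable_square[OF assms] in auto)
  ultimately show ?thesis by simp
qed

lemma L2_sqnorm_diff_scale:
  assumes "in_L2 D u" "in_L2 D v"
  shows "L2_sqnorm (\<lambda>x. u x - t * v x) = L2_sqnorm u - 2 * t * L2_inner u v + t\<^sup>2 * L2_sqnorm v"
proof -
  have "L2_sqnorm (\<lambda>x. u x - t * v x) = (\<integral>x. (u x)\<^sup>2 - 2 * t * (u x * v x) + t\<^sup>2 * (v x)\<^sup>2 \<partial>lebesgue)"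
    unfolding L2_inner_def by (simp add: power2_eq_square algebra_simps)
  then show ?thesis
    unfolding L2_inner_def
    using in_L2_integrable_square[OF assms(1)] in_L2_integrable_square[OF assms(2)]
      in_L2_integrable_mult[OF assms]
    by (simp add: power2_eq_square)
qed

lemma L2_Cauchy_Schwarz:
  assumes "in_L2 D u" "in_L2 D v"
  shows "(L2_inner u v)\<^sup>2 \<le> L2_sqnorm u * L2_sqnorm v"
proof -
  have q: "0 \<le> L2_sqnorm u - 2 * t * L2_inner u v + t\<^sup>2 * L2_sqnorm v" for t
    using L2_sqnorm_diff_scale[OF assms, of t] L2_sqnorm_nonneg[of "\<lambda>x. u x - t * v x"] by simp
  show ?thesis
  proof (cases "L2_sqnorm v = 0")
    case True
    have "L2_inner u v = 0"
    proof (rule ccontr)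
      assume ne: "L2_inner u v \<noteq> 0"
      have "0 \<le> L2_sqnorm u - 2 * ((L2_sqnorm u + 1) / (2 * L2_inner u v)) * L2_inner u v"
        using q[of "(L2_sqnorm u + 1) / (2 * L2_inner u v)"] True by simp
      also have "\<dots> = -1" using ne by (simp add: field_simps)
      finally show False by simp
    qed
    then show ?thesis using True by simp
  next
    case False
    then have pos: "L2_sqnorm v > 0" using L2_sqnorm_nonneg[of v] by simp
    have "0 \<le> L2_sqnorm u - 2 * (L2_inner u v / L2_sqnorm v) * L2_inner u v
        + (L2_inner u v / L2_sqnorm v)\<^sup>2 * L2_sqnorm v"
      using q by blast
    also have "\<dots> = L2_sqnorm u - (L2_inner u v)\<^sup>2 / L2_sqnorm v"
      using pos by (simp add: field_simps power2_eq_square)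
    finally show ?thesis using pos by (simp add: field_simps)
  qed
qed

lemma L2_sqnorm_add_le:
  assumes "in_L2 D u" "in_L2 D v"
  shows "L2_sqnorm (\<lambda>x. u x + v x) \<le> 2 * L2_sqnorm u + 2 * L2_sqnorm v"
proof -
  have "L2_sqnorm (\<lambda>x. u x + v x) = (\<integral>x. (u x + v x)\<^sup>2 \<partial>lebesgue)"
    "L2_sqnorm u = (\<integral>x. (u x)\<^sup>2 \<partial>lebesgue)" "L2_sqnorm v = (\<integral>x. (v x)\<^sup>2 \<partial>lebesgue)"
    unfolding L2_inner_def by (simp_all add: power2_eq_square)
  moreover have "(\<integral>x. (u x + v x)\<^sup>2 \<partial>lebesgue) \<le> (\<integral>x. 2 * (u x)\<^sup>2 + 2 * (v x)\<^sup>2 \<partial>lebesgue)"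
    using in_L2_integrable_square[OF in_L2_lincomb[OF assms, of 1 1]]
      in_L2_integrable_square[OF assms(1)] in_L2_integrable_square[OF assms(2)]
    by (intro integral_mono) (auto simp: square_add_le)
  ultimately show ?thesis
    using in_L2_integrable_square[OF assms(1)] in_L2_integrable_square[OF assms(2)] by simp
qed

lemma L2_sqnorm_diff_le:
  assumes "in_L2 D u" "in_L2 D v"
  shows "L2_sqnorm (\<lambda>x. u x - v x) \<le> 2 * L2_sqnorm u + 2 * L2_sqnorm v"
proof -
  have "L2_sqnorm (\<lambda>x. u x - v x) = L2_sqnorm (\<lambda>x. u x + (- 1) * v x)" by simp
  also have "\<dots> \<le> 2 * L2_sqnorm u + 2 * L2_sqnorm (\<lambda>x. (- 1) * v x)"
    by (rule L2_sqnorm_add_le[OF assms(1) in_L2_scale[OF assms(2)]])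
  finally show ?thesis by (simp only: L2_sqnorm_scale) simp
qed

locale bounded_domain =
  fixes D :: "'a::euclidean_space set"
  assumes bounded_D: "bounded D" and D_lebesgue [measurable]: "D \<in> sets lebesgue"
begin

lemma integrable_indicator_D: "integrable lebesgue (indicator D :: 'a \<Rightarrow> real)"
  using bounded_set_imp_lmeasurable[OF bounded_D D_lebesgue] by (simp add: fmeasurable_def)

lemma in_L2_integrable:
  assumes "in_L2 D u"
  shows "integrable lebesgue u"
proof (rule Bochner_Integration.integrable_bound)
  show "integrable lebesgue (\<lambda>x. indicator D x + (u x)\<^sup>2 :: real)"
    using integrable_indicator_D in_L2_integrable_square[OF assms] by auto
  show "AE x in lebesgue. norm (u x) \<le> norm (indicator D x + (u x)\<^sup>2 :: real)"
    using abs_le_1_plus_square in_L2_outside[OF assms] by (auto simp: indicator_def)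
qed (rule in_L2_measurable[OF assms])

lemma in_L2_if_bounded:
  assumes "f \<in> borel_measurable lebesgue" "\<And>x. \<bar>f x\<bar> \<le> M" "\<And>x. x \<notin> D \<Longrightarrow> f x = 0"
  shows "in_L2 D f"
  unfolding in_L2_def
proof (intro conjI)
  show "integrable lebesgue (\<lambda>x. (f x)\<^sup>2)"
  proof (rule Bochner_Integration.integrable_bound)
    show "integrable lebesgue (\<lambda>x. M\<^sup>2 * indicator D x :: real)"
      using integrable_indicator_D by auto
    have "(f x)\<^sup>2 \<le> M\<^sup>2" for x
      using assms(2)[of x] by (meson abs_ge_self dual_order.trans power2_mono)
    then show "AE x in lebesgue. norm ((f x)\<^sup>2) \<le> norm (M\<^sup>2 * indicator D x :: real)"
      using assms(3) by (auto simp: indicator_def)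
  qed (use assms(1) in measurable)
qed (use assms(1,3) in auto)

lemma L2_sqnorm_le_sup:
  assumes "in_L2 D a" "\<And>x. x \<in> D \<Longrightarrow> \<bar>a x\<bar> \<le> e"
  shows "L2_sqnorm a \<le> e\<^sup>2 * measure lebesgue D"
proof -
  have "L2_sqnorm a = (\<integral>x. (a x)\<^sup>2 \<partial>lebesgue)"
    unfolding L2_inner_def by (simp add: power2_eq_square)
  also have "\<dots> \<le> (\<integral>x. e\<^sup>2 * indicator D x \<partial>lebesgue)"
  proof (rule integral_mono)
    show "integrable lebesgue (\<lambda>x. e\<^sup>2 * indicator D x :: real)"
      using integrable_indicator_D by auto
    show "(a x)\<^sup>2 \<le> e\<^sup>2 * indicator D x" for x
      using assms(2)[of x] in_L2_outside[OF assms(1), of x]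
      by (cases "x \<in> D") (auto intro: power2_mono[where x = "\<bar>_\<bar>", simplified])
  qed (rule in_L2_integrable_square[OF assms(1)])
  also have "\<dots> = e\<^sup>2 * measure lebesgue D" by simp
  finally show ?thesis .
qed

lemma L2_sqnorm_tendsto_0_if_uniformly_small:
  assumes f: "\<And>n. in_L2 D (f n)" and small: "\<And>e. 0 < e \<Longrightarrow> \<exists>N. \<forall>n\<ge>N. \<forall>x\<in>D. \<bar>f n x\<bar> \<le> e"
  shows "(\<lambda>n. L2_sqnorm (f n)) \<longlonglongrightarrow> 0"
proof (rule LIMSEQ_I)
  fix \<epsilon> :: real assume "0 < \<epsilon>"
  define m where "m = measure lebesgue D"
  have m: "0 \<le> m" unfolding m_def by simp
  have "0 < sqrt (\<epsilon> / (m + 1))" using \<open>0 < \<epsilon>\<close> m by simp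
  then obtain N where N: "\<And>n x. n \<ge> N \<Longrightarrow> x \<in> D \<Longrightarrow> \<bar>f n x\<bar> \<le> sqrt (\<epsilon> / (m + 1))"
    using small by blast
  have "norm (L2_sqnorm (f n) - 0) < \<epsilon>" if "n \<ge> N" for n
  proof -
    have "L2_sqnorm (f n) \<le> (sqrt (\<epsilon> / (m + 1)))\<^sup>2 * m"
      unfolding m_def by (rule L2_sqnorm_le_sup[OF f]) (use N[OF that] in \<open>simp add: m_def\<close>)
    also have "\<dots> = \<epsilon> * m / (m + 1)" using \<open>0 < \<epsilon>\<close> m by simp
    also have "\<dots> < \<epsilon>" using \<open>0 < \<epsilon>\<close> m by (simp add: field_simps)
    finally show ?thesis using L2_sqnorm_nonneg[of "f n"] by simp
  qed
  then show "\<exists>N. \<forall>n\<ge>N. norm (L2_sqnorm (f n) - 0) < \<epsilon>" by blast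
qed

lemma L1_norm_square_le:
  assumes "in_L2 D u"
  shows "(L1_norm u)\<^sup>2 \<le> measure lebesgue D * L2_sqnorm u"
proof -
  have ind: "in_L2 D (indicator D)"
    by (rule in_L2_if_bounded[of _ 1]) (auto simp: indicator_def)
  have "L1_norm u = L2_inner (\<lambda>x. \<bar>u x\<bar>) (indicator D)"
    unfolding L1_norm_def L2_inner_def
    by (rule Bochner_Integration.integral_cong) (auto simp: indicator_def in_L2_outside[OF assms])
  moreover have "L2_sqnorm (indicator D :: 'a \<Rightarrow> real) = measure lebesgue D"
    unfolding L2_inner_def by (simp add: indicator_inter_arith[symmetric])
  ultimately show ?thesis
    using L2_Cauchy_Schwarz[OF in_L2_abs[OF assms] ind] by (simp add: L2_sqnorm_abs mult.commute)
qed

lemma L1_norm_nonneg: "L1_norm u \<ge> 0"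
  unfolding L1_norm_def by (rule integral_nonneg_AE) auto

end

section \<open>The operator \<open>J\<^sub>U\<close>\<close>

locale kernel_operator = bounded_domain D for D :: "'a::euclidean_space set" +
  fixes J :: "'a \<Rightarrow> real" and U :: "'a set"
  assumes J_continuous: "continuous_on UNIV J" and J_nonneg: "\<And>x. 0 \<le> J x"
    and J_le_J0: "\<And>x. J x \<le> J 0" and J_minus: "\<And>x. J (- x) = J x"
    and open_U: "open U" and U_subset: "U \<subseteq> D"
begin

definition J_conv :: "('a \<Rightarrow> real) \<Rightarrow> 'a \<Rightarrow> real" where
  "J_conv u x = (\<integral>y. indicator U y * (J (x - y) * u y) \<partial>lebesgue)"

definition JU :: "('a \<Rightarrow> real) \<Rightarrow> 'a \<Rightarrow> real" where
  "JU u x = indicator U x * J_conv u x"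

lemma Jop_eq_JU: "Jop J U u x = JU u x"
  by (simp add: Jop_def JU_def J_conv_def set_lebesgue_integral_def)

lemma JU_indicator_D: "JU (\<lambda>x. indicator D x * u x) = JU u"
proof -
  have "J_conv (\<lambda>x. indicator D x * u x) x = J_conv u x" for x
    unfolding J_conv_def using U_subset
    by (intro Bochner_Integration.integral_cong) (auto simp: indicator_def)
  then show ?thesis unfolding JU_def by auto
qed

lemma bounded_U: "bounded U"
  using bounded_D U_subset bounded_subset by blast

lemma U_lebesgue [measurable]: "U \<in> sets lebesgue"
  using lmeasurable_open[OF bounded_U open_U] by (simp add: fmeasurableD)

lemma J_borel_measurable [measurable]: "J \<in> borel_measurable borel"
  by (rule borel_measurable_continuous_onI[OF J_continuous])

lemma J_translate_measurable [measurable]: "(\<lambda>y. J (x - y)) \<in> borel_measurable lebesgue"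
  by (rule measurable_lebesgue_if_borel) measurable

lemma abs_J_le_J0: "\<bar>J x\<bar> \<le> J 0"
  using J_le_J0[of x] J_nonneg[of x] by simp

lemma integrable_J_conv_integrand:
  assumes "in_L2 D u"
  shows "integrable lebesgue (\<lambda>y. indicator U y * (J (x - y) * u y))"
proof (rule Bochner_Integration.integrable_bound)
  show "integrable lebesgue (\<lambda>y. J 0 * u y)"
    using in_L2_integrable[OF assms] by simp
  show "(\<lambda>y. indicator U y * (J (x - y) * u y)) \<in> borel_measurable lebesgue"
    using in_L2_measurable[OF assms] by measurable
  have "\<bar>J (x - y)\<bar> * \<bar>u y\<bar> \<le> \<bar>J 0\<bar> * \<bar>u y\<bar>" for y
    using abs_J_le_J0[of "x - y"] by (intro mult_right_mono) auto
  then show "AE y in lebesgue. norm (indicator U y * (J (x - y) * u y)) \<le> norm (J 0 * u y)"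
    by (auto simp: indicator_def abs_mult)
qed

lemma J_conv_diff_bound:
  assumes "in_L2 D u" "0 \<le> e" and e: "\<And>y. y \<in> U \<Longrightarrow> \<bar>J (x - y) - J (x' - y)\<bar> \<le> e"
  shows "\<bar>J_conv u x - J_conv u x'\<bar> \<le> e * L1_norm u"
proof -
  let ?f = "\<lambda>y. indicator U y * ((J (x - y) - J (x' - y)) * u y)"
  have int: "integrable lebesgue ?f"
    using Bochner_Integration.integrable_diff[OF integrable_J_conv_integrand[OF assms(1), of x]
        integrable_J_conv_integrand[OF assms(1), of x']]
    by (simp add: algebra_simps)
  have "J_conv u x - J_conv u x' = (\<integral>y. ?f y \<partial>lebesgue)"
    unfolding J_conv_def
    using integrable_J_conv_integrand[OF assms(1), of x] integrable_J_conv_integrand[OF assms(1), of x']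
    by (subst Bochner_Integration.integral_diff[symmetric]) (auto simp: algebra_simps)
  also have "\<bar>\<dots>\<bar> \<le> (\<integral>y. norm (?f y) \<partial>lebesgue)"
    using Bochner_Integration.integral_norm_bound[of lebesgue ?f] by simp
  also have "\<dots> \<le> (\<integral>y. e * \<bar>u y\<bar> \<partial>lebesgue)"
  proof (rule integral_mono)
    show "integrable lebesgue (\<lambda>y. e * \<bar>u y\<bar>)"
      using in_L2_integrable[OF assms(1)] by auto
    show "norm (?f y) \<le> e * \<bar>u y\<bar>" for y
      using e[of y] assms(2) by (cases "y \<in> U") (auto simp: abs_mult intro: mult_right_mono)
  qed (use int in auto)
  also have "\<dots> = e * L1_norm u" unfolding L1_norm_def by simp
  finally show ?thesis .
qed

lemma J_conv_bound:
  assumes "in_L2 D u"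
  shows "\<bar>J_conv u x\<bar> \<le> J 0 * L1_norm u"
proof -
  let ?f = "\<lambda>y. indicator U y * (J (x - y) * u y)"
  have "\<bar>J_conv u x\<bar> \<le> (\<integral>y. norm (?f y) \<partial>lebesgue)"
    unfolding J_conv_def using Bochner_Integration.integral_norm_bound[of lebesgue ?f] by simp
  also have "\<dots> \<le> (\<integral>y. J 0 * \<bar>u y\<bar> \<partial>lebesgue)"
  proof (rule integral_mono)
    show "integrable lebesgue (\<lambda>y. norm (?f y))"
      using integrable_J_conv_integrand[OF assms] by auto
    show "integrable lebesgue (\<lambda>y. J 0 * \<bar>u y\<bar>)"
      using in_L2_integrable[OF assms] by auto
    have "\<bar>J (x - y)\<bar> * \<bar>u y\<bar> \<le> J 0 * \<bar>u y\<bar>" for y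
      using abs_J_le_J0[of "x - y"] by (intro mult_right_mono) auto
    then show "norm (?f y) \<le> J 0 * \<bar>u y\<bar>" for y
      using J_nonneg[of 0] by (auto simp: indicator_def abs_mult)
  qed
  also have "\<dots> = J 0 * L1_norm u" unfolding L1_norm_def by simp
  finally show ?thesis .
qed

lemma J_translate_equicontinuous:
  assumes "0 < e"
  shows "\<exists>d>0. \<forall>x'. dist x' x < d \<longrightarrow> (\<forall>y\<in>U. \<bar>J (x - y) - J (x' - y)\<bar> < e)"
proof -
  obtain R where R: "\<And>y. y \<in> D \<Longrightarrow> norm y \<le> R" using bounded_D bounded_iff by blast
  define K where "K = cball (0::'a) (norm x + 1 + R)"
  have "uniformly_continuous_on K J"
    unfolding K_def
    by (rule compact_uniformly_continuous) (auto intro: continuous_on_subset[OF J_continuous])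
  then obtain d0 where d0: "d0 > 0"
    "\<And>a b. a \<in> K \<Longrightarrow> b \<in> K \<Longrightarrow> dist b a < d0 \<Longrightarrow> dist (J b) (J a) < e"
    using assms unfolding uniformly_continuous_on_def by blast
  show ?thesis
  proof (intro exI[of _ "min d0 1"] conjI allI impI ballI)
    fix x' y assume x': "dist x' x < min d0 1" and y: "y \<in> U"
    have ny: "norm y \<le> R" using R y U_subset by auto
    have "norm x' \<le> norm x + 1" using x' norm_triangle_ineq2[of x' x] by (simp add: dist_norm)
    then have "x - y \<in> K" "x' - y \<in> K"
      unfolding K_def using ny norm_triangle_ineq4[of x y] norm_triangle_ineq4[of x' y] by simp_all
    moreover have "dist (x' - y) (x - y) < d0" using x' by (simp add: dist_norm)
    ultimately show "\<bar>J (x - y) - J (x' - y)\<bar> < e"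
      using d0(2) by (fastforce simp: dist_real_def abs_minus_commute)
  qed (use d0 in simp)
qed

lemma J_conv_continuous:
  assumes "in_L2 D u"
  shows "continuous_on UNIV (J_conv u)"
proof -
  have "isCont (J_conv u) x" for x
    unfolding continuous_at_eps_delta
  proof (intro allI impI)
    fix r :: real assume r: "0 < r"
    define e where "e = r / (2 * (L1_norm u + 1))"
    have e: "0 < e" unfolding e_def using r L1_norm_nonneg[of u] by simp
    obtain d where d: "d > 0" "\<And>x'. dist x' x < d \<Longrightarrow> \<forall>y\<in>U. \<bar>J (x - y) - J (x' - y)\<bar> < e"
      using J_translate_equicontinuous[OF e, of x] by blast
    have "dist (J_conv u x') (J_conv u x) < r" if "dist x' x < d" for x'
    proof -
      have "\<bar>J_conv u x - J_conv u x'\<bar> \<le> e * L1_norm u"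
        using J_conv_diff_bound[OF assms, of e x x'] d(2)[OF that] e by force
      also have "\<dots> \<le> e * (L1_norm u + 1)" using e by simp
      also have "\<dots> = r / 2" unfolding e_def using L1_norm_nonneg[of u] by (simp add: field_simps)
      finally show ?thesis using r by (simp add: dist_real_def abs_minus_commute)
    qed
    then show "\<exists>d>0. \<forall>x'. dist x' x < d \<longrightarrow> dist (J_conv u x') (J_conv u x) < r"
      using d(1) by blast
  qed
  then show ?thesis by (simp add: continuous_on_eq_continuous_at)
qed

lemma J_conv_measurable [measurable]:
  "in_L2 D u \<Longrightarrow> J_conv u \<in> borel_measurable lebesgue"
  by (rule measurable_lebesgue_if_borel, rule borel_measurable_continuous_onI[OF J_conv_continuous])

lemma JU_bound: "in_L2 D u \<Longrightarrow> \<bar>JU u x\<bar> \<le> J 0 * L1_norm u"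
  unfolding JU_def using J_conv_bound[of u x] J_nonneg[of 0] L1_norm_nonneg[of u]
  by (auto simp: indicator_def)

lemma in_L2_JU: "in_L2 D u \<Longrightarrow> in_L2 D (JU u)"
  by (rule in_L2_if_bounded[OF _ JU_bound]) (use U_subset in \<open>auto simp: JU_def indicator_def\<close>)

lemma J_conv_lincomb:
  assumes "in_L2 D u" "in_L2 D v"
  shows "J_conv (\<lambda>y. a * u y + b * v y) x = a * J_conv u x + b * J_conv v x"
proof -
  have "J_conv (\<lambda>y. a * u y + b * v y) x = (\<integral>y. a * (indicator U y * (J (x - y) * u y))
      + b * (indicator U y * (J (x - y) * v y)) \<partial>lebesgue)"
    unfolding J_conv_def by (simp add: algebra_simps)
  then show ?thesis
    unfolding J_conv_def
    using integrable_J_conv_integrand[OF assms(1), of x] integrable_J_conv_integrand[OF assms(2), of x]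
    by simp
qed

lemma JU_lincomb:
  "in_L2 D u \<Longrightarrow> in_L2 D v \<Longrightarrow> JU (\<lambda>y. a * u y + b * v y) = (\<lambda>x. a * JU u x + b * JU v x)"
  unfolding JU_def by (auto simp: J_conv_lincomb algebra_simps)

lemma integrable_J_kernel_product:
  assumes u: "in_L2 D u" and v: "in_L2 D v"
  shows "integrable (lebesgue \<Otimes>\<^sub>M lebesgue)
    (\<lambda>(x, y). indicator U x * v x * (indicator U y * (J (x - y) * u y)))"
proof -
  note [measurable] = in_L2_measurable[OF u] in_L2_measurable[OF v]
  define F where "F x y = indicator U x * v x * (indicator U y * (J (x - y) * u y))" for x y
  have norm_F: "(\<integral>y. norm (F x y) \<partial>lebesgue) = indicator U x * \<bar>v x\<bar> * J_conv (\<lambda>y. \<bar>u y\<bar>) x" for x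
  proof -
    have "(\<integral>y. norm (F x y) \<partial>lebesgue) = (\<integral>y. (indicator U x * \<bar>v x\<bar>)
        * (indicator U y * (J (x - y) * \<bar>u y\<bar>)) \<partial>lebesgue)"
      unfolding F_def
      by (rule Bochner_Integration.integral_cong) (auto simp: abs_mult J_nonneg indicator_def)
    then show ?thesis unfolding J_conv_def by simp
  qed
  have "integrable lebesgue (\<lambda>x. \<integral>y. norm (F x y) \<partial>lebesgue)"
    unfolding norm_F
  proof (rule Bochner_Integration.integrable_bound)
    show "integrable lebesgue (\<lambda>x. (J 0 * L1_norm (\<lambda>y. \<bar>u y\<bar>)) * \<bar>v x\<bar>)"
      using in_L2_integrable[OF v] by auto
    show "(\<lambda>x. indicator U x * \<bar>v x\<bar> * J_conv (\<lambda>y. \<bar>u y\<bar>) x) \<in> borel_measurable lebesgue"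
      using J_conv_measurable[OF in_L2_abs[OF u]] by measurable
    have "\<bar>indicator U x * \<bar>v x\<bar> * J_conv (\<lambda>y. \<bar>u y\<bar>) x\<bar> \<le> \<bar>v x\<bar> * (J 0 * L1_norm (\<lambda>y. \<bar>u y\<bar>))"
      for x
      using J_conv_bound[OF in_L2_abs[OF u], of x]
      by (auto simp: indicator_def abs_mult intro: mult_left_mono)
    then show "AE x in lebesgue. norm (indicator U x * \<bar>v x\<bar> * J_conv (\<lambda>y. \<bar>u y\<bar>) x)
        \<le> norm (J 0 * L1_norm (\<lambda>y. \<bar>u y\<bar>) * \<bar>v x\<bar>)"
      using J_nonneg[of 0] L1_norm_nonneg[of "\<lambda>y. \<bar>u y\<bar>"] by (simp add: abs_mult mult_ac)
  qed
  moreover have "(\<lambda>(x, y). F x y) \<in> borel_measurable (lebesgue \<Otimes>\<^sub>M lebesgue)"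
    unfolding F_def case_prod_beta by measurable
  moreover have "AE x in lebesgue. integrable lebesgue (\<lambda>y. F x y)"
    unfolding F_def using integrable_J_conv_integrand[OF u] by auto
  ultimately show ?thesis
    unfolding F_def[symmetric] by (intro lebesgue_pair.Fubini_integrable) auto
qed

lemma JU_symmetric:
  assumes u: "in_L2 D u" and v: "in_L2 D v"
  shows "L2_inner (JU u) v = L2_inner u (JU v)"
proof -
  define F where "F x y = indicator U x * v x * (indicator U y * (J (x - y) * u y))" for x y
  have "(\<integral>y. F x y \<partial>lebesgue) = JU u x * v x" for x
    unfolding F_def JU_def J_conv_def integral_mult_right_zero by (simp add: mult_ac)
  then have inner_x: "L2_inner (JU u) v = (\<integral>x. (\<integral>y. F x y \<partial>lebesgue) \<partial>lebesgue)"
    unfolding L2_inner_def by simp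
  have "(\<integral>x. F x y \<partial>lebesgue) = u y * JU v y" for y
  proof -
    have "(\<integral>x. F x y \<partial>lebesgue)
        = (\<integral>x. (u y * indicator U y) * (indicator U x * (J (y - x) * v x)) \<partial>lebesgue)"
      unfolding F_def using J_minus[of "x - y" for x]
      by (intro Bochner_Integration.integral_cong) (simp_all add: mult_ac)
    then show ?thesis unfolding JU_def J_conv_def integral_mult_right_zero by (simp add: mult_ac)
  qed
  then have inner_y: "L2_inner u (JU v) = (\<integral>y. (\<integral>x. F x y \<partial>lebesgue) \<partial>lebesgue)"
    unfolding L2_inner_def by simp
  show ?thesis
    unfolding inner_x inner_y F_def
    by (rule lebesgue_pair.Fubini_integral[OF integrable_J_kernel_product[OF u v], symmetric])
qed

lemma L2_sqnorm_JU_le: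
  assumes u: "in_L2 D u"
  shows "L2_sqnorm (JU u) \<le> (J 0 * measure lebesgue D)\<^sup>2 * L2_sqnorm u"
proof -
  have "L2_sqnorm (JU u) \<le> (J 0 * L1_norm u)\<^sup>2 * measure lebesgue D"
    using J_nonneg[of 0] L1_norm_nonneg[of u]
    by (intro L2_sqnorm_le_sup[OF in_L2_JU[OF u]] JU_bound[OF u])
  also have "\<dots> \<le> (J 0)\<^sup>2 * (measure lebesgue D * L2_sqnorm u) * measure lebesgue D"
    unfolding power_mult_distrib by (intro mult_right_mono mult_left_mono L1_norm_square_le[OF u]) auto
  finally show ?thesis by (simp add: power2_eq_square mult_ac)
qed

end

section \<open>Resolvents of symmetric operators\<close>

lemma Riccati_upper_bound:
  fixes g g' :: "real \<Rightarrow> real"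
  assumes r: "r > 0" and \<nu>: "\<nu> > 0"
    and deriv: "\<And>t. \<mu> \<le> t \<Longrightarrow> t < \<mu> + r \<Longrightarrow> DERIV g t :> g' t"
    and riccati: "\<And>t. \<mu> \<le> t \<Longrightarrow> t < \<mu> + r \<Longrightarrow> (g t)\<^sup>2 \<le> \<nu> * g' t"
  shows "g \<mu> \<le> \<nu> / r"
proof (rule ccontr)
  assume "\<not> ?thesis"
  then have gs: "\<nu> / r < g \<mu>" by simp
  define s where "s = g \<mu>"
  have s: "s > 0" using gs r \<nu> unfolding s_def by (meson divide_pos_pos less_trans)
  \<comment> \<open>\<open>-\<nu>/g t - t\<close> is nondecreasing while \<open>g\<close> stays positive, which forces
    \<open>g\<close> to blow up before \<open>\<mu> + \<nu>/s < \<mu> + r\<close>.\<close>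
  define t1 where "t1 = \<mu> + \<nu> / s"
  have "\<nu> / s < r" using gs r \<nu> s unfolding s_def by (simp add: field_simps)
  then have t1: "\<mu> \<le> t1" "t1 < \<mu> + r" unfolding t1_def using \<nu> s by simp_all
  have g'_nonneg: "0 \<le> g' t" if "\<mu> \<le> t" "t < \<mu> + r" for t
  proof -
    have "0 \<le> \<nu> * g' t" using riccati[OF that] zero_le_power2[of "g t"] by linarith
    then show ?thesis using \<nu> by (simp add: zero_le_mult_iff)
  qed
  have g_ge: "s \<le> g t" if "\<mu> \<le> t" "t \<le> t1" for t
    unfolding s_def
  proof (rule DERIV_nonneg_imp_nondecreasing[OF that(1)])
    fix x assume "\<mu> \<le> x" "x \<le> t"
    then show "\<exists>y. DERIV g x :> y \<and> 0 \<le> y"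
      using deriv g'_nonneg that t1 by (meson le_less_trans order_trans)
  qed
  define \<phi> where "\<phi> t = - \<nu> / g t - t" for t
  have "\<phi> \<mu> \<le> \<phi> t1"
  proof (rule DERIV_nonneg_imp_nondecreasing[OF t1(1)])
    fix t assume t: "\<mu> \<le> t" "t \<le> t1"
    then have tr: "t < \<mu> + r" using t1 by linarith
    have gt: "g t > 0" using g_ge[OF t] s by linarith
    show "\<exists>y. DERIV \<phi> t :> y \<and> 0 \<le> y"
    proof (intro exI conjI)
      show "DERIV \<phi> t :> \<nu> * g' t / (g t)\<^sup>2 - 1"
        unfolding \<phi>_def using deriv[OF t(1) tr] gt
        by (auto intro!: derivative_eq_intros simp: field_simps power2_eq_square)
      show "0 \<le> \<nu> * g' t / (g t)\<^sup>2 - 1"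
        using riccati[OF t(1) tr] gt by (simp add: field_simps)
    qed
  qed
  then have "\<nu> / g t1 \<le> 0" unfolding \<phi>_def t1_def s_def by simp
  moreover have "g t1 > 0" using g_ge[of t1] t1 s by simp
  ultimately show False using \<nu> by (simp add: divide_le_0_iff)
qed

lemma Riccati_bound:
  fixes g g' :: "real \<Rightarrow> real"
  assumes r: "r > 0" and \<nu>: "\<nu> > 0"
    and deriv: "\<And>t. \<bar>t - \<mu>\<bar> < r \<Longrightarrow> DERIV g t :> g' t"
    and riccati: "\<And>t. \<bar>t - \<mu>\<bar> < r \<Longrightarrow> (g t)\<^sup>2 \<le> \<nu> * g' t"
  shows "\<bar>g \<mu>\<bar> \<le> \<nu> / r"
proof -
  have "g \<mu> \<le> \<nu> / r"
    by (rule Riccati_upper_bound[OF r \<nu>, where g = g and g' = g']) (use deriv riccati in auto)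
  moreover have "- g (2 * \<mu> - \<mu>) \<le> \<nu> / r"
  proof (rule Riccati_upper_bound[OF r \<nu>, where g = "\<lambda>t. - g (2 * \<mu> - t)"])
    fix t assume t: "\<mu> \<le> t" "t < \<mu> + r"
    then have "\<bar>(2 * \<mu> - t) - \<mu>\<bar> < r" by linarith
    note deriv[OF this] riccati[OF this]
    have "DERIV (\<lambda>t. g (2 * \<mu> - t)) t :> g' (2 * \<mu> - t) * (- 1)"
      by (rule DERIV_chain'[where f = "\<lambda>t. 2 * \<mu> - t"]) (auto intro!: derivative_eq_intros \<open>DERIV g _ :> _\<close>)
    then show "DERIV (\<lambda>t. - g (2 * \<mu> - t)) t :> g' (2 * \<mu> - t)"
      using DERIV_minus by fastforce
    show "(- g (2 * \<mu> - t))\<^sup>2 \<le> \<nu> * g' (2 * \<mu> - t)"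
      using \<open>(g (2 * \<mu> - t))\<^sup>2 \<le> _\<close> by simp
  qed
  ultimately show ?thesis by simp
qed

locale symmetric_L2_operator =
  fixes D :: "'a::euclidean_space set" and T :: "('a \<Rightarrow> real) \<Rightarrow> 'a \<Rightarrow> real"
  assumes in_L2_T: "in_L2 D u \<Longrightarrow> in_L2 D (T u)"
    and T_lincomb: "in_L2 D u \<Longrightarrow> in_L2 D v \<Longrightarrow>
      T (\<lambda>y. a * u y + b * v y) = (\<lambda>x. a * T u x + b * T v x)"
    and T_symmetric: "in_L2 D u \<Longrightarrow> in_L2 D v \<Longrightarrow> L2_inner (T u) v = L2_inner u (T v)"
begin

definition shift :: "real \<Rightarrow> ('a \<Rightarrow> real) \<Rightarrow> 'a \<Rightarrow> real" where
  "shift t w x = T w x - t * w x"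

definition regular :: "real \<Rightarrow> bool" where
  "regular t \<longleftrightarrow>
     (\<forall>f. in_L2 D f \<longrightarrow> (\<exists>w. in_L2 D w \<and> (AE x in lebesgue. shift t w x = f x))) \<and>
     (\<forall>w. in_L2 D w \<longrightarrow> (AE x in lebesgue. T w x = t * w x) \<longrightarrow> (AE x in lebesgue. w x = 0))"

definition bounded_below :: "real \<Rightarrow> bool" where
  "bounded_below t \<longleftrightarrow> (\<exists>c>0. \<forall>w. in_L2 D w \<longrightarrow> c * L2_sqnorm w \<le> L2_sqnorm (shift t w))"

definition resolvent :: "real \<Rightarrow> ('a \<Rightarrow> real) \<Rightarrow> 'a \<Rightarrow> real" where
  "resolvent t f = (SOME w. in_L2 D w \<and> (AE x in lebesgue. shift t w x = f x))"

lemma in_L2_shift: "in_L2 D w \<Longrightarrow> in_L2 D (shift t w)"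
  unfolding shift_def by (rule in_L2_diff[OF in_L2_T in_L2_scale])

lemma shift_lincomb:
  "in_L2 D u \<Longrightarrow> in_L2 D v \<Longrightarrow>
    shift t (\<lambda>y. a * u y + b * v y) = (\<lambda>x. a * shift t u x + b * shift t v x)"
  unfolding shift_def by (auto simp: T_lincomb algebra_simps)

lemma shift_scale: "in_L2 D u \<Longrightarrow> shift t (\<lambda>y. a * u y) = (\<lambda>x. a * shift t u x)"
  using shift_lincomb[of u u t a 0] by simp

lemma shift_symmetric:
  assumes "in_L2 D u" "in_L2 D v"
  shows "L2_inner (shift t u) v = L2_inner u (shift t v)"
  using L2_inner_lincomb_left[OF in_L2_T[OF assms(1)] assms, of 1 "-t"]
    L2_inner_lincomb_right[OF in_L2_T[OF assms(2)] assms(2,1), of 1 "-t"] T_symmetric[OF assms]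
  by (simp add: shift_def[abs_def])

lemma
  assumes "regular t" "in_L2 D f"
  shows in_L2_resolvent: "in_L2 D (resolvent t f)"
    and shift_resolvent: "AE x in lebesgue. shift t (resolvent t f) x = f x"
proof -
  have "\<exists>w. in_L2 D w \<and> (AE x in lebesgue. shift t w x = f x)"
    using assms unfolding regular_def by blast
  then have "in_L2 D (resolvent t f) \<and> (AE x in lebesgue. shift t (resolvent t f) x = f x)"
    unfolding resolvent_def by (rule someI_ex)
  then show "in_L2 D (resolvent t f)" "AE x in lebesgue. shift t (resolvent t f) x = f x"
    by auto
qed

lemma resolvent_unique:
  assumes t: "regular t" and w: "in_L2 D w" and f: "in_L2 D f"
    and eq: "AE x in lebesgue. shift t w x = f x"
  shows "AE x in lebesgue. resolvent t f x = w x"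
proof -
  let ?d = "\<lambda>x. resolvent t f x - w x"
  have "AE x in lebesgue. T ?d x = t * ?d x"
    using shift_resolvent[OF t f] eq
    unfolding T_lincomb[OF in_L2_resolvent[OF t f] w, of 1 "-1", simplified] shift_def
    by eventually_elim (simp add: algebra_simps)
  then have "AE x in lebesgue. ?d x = 0"
    using t in_L2_diff[OF in_L2_resolvent[OF t f] w] unfolding regular_def by blast
  then show ?thesis by auto
qed

lemma resolvent_shift:
  "regular t \<Longrightarrow> in_L2 D w \<Longrightarrow> AE x in lebesgue. resolvent t (shift t w) x = w x"
  by (rule resolvent_unique[OF _ _ in_L2_shift]) auto

lemma resolvent_lincomb:
  assumes t: "regular t" and f: "in_L2 D f" and g: "in_L2 D g"
  shows "AE x in lebesgue. resolvent t (\<lambda>y. a * f y + b * g y) x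
    = a * resolvent t f x + b * resolvent t g x"
proof (rule resolvent_unique[OF t in_L2_lincomb in_L2_lincomb[OF f g]])
  show "AE x in lebesgue. shift t (\<lambda>x. a * resolvent t f x + b * resolvent t g x) x = a * f x + b * g x"
    unfolding shift_lincomb[OF in_L2_resolvent[OF t f] in_L2_resolvent[OF t g]]
    using shift_resolvent[OF t f] shift_resolvent[OF t g] by auto
qed (use in_L2_resolvent[OF t] f g in auto)

lemma resolvent_symmetric:
  assumes t: "regular t" and f: "in_L2 D f" and g: "in_L2 D g"
  shows "L2_inner (resolvent t f) g = L2_inner f (resolvent t g)"
proof -
  note Rf = in_L2_resolvent[OF t f] and Rg = in_L2_resolvent[OF t g]
  have "L2_inner (resolvent t f) g = L2_inner (resolvent t f) (shift t (resolvent t g))"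
    by (rule L2_inner_cong_AE) (use shift_resolvent[OF t g] Rf g in_L2_shift[OF Rg] in auto)
  also have "\<dots> = L2_inner (shift t (resolvent t f)) (resolvent t g)"
    by (rule shift_symmetric[OF Rf Rg, symmetric])
  also have "\<dots> = L2_inner f (resolvent t g)"
    by (rule L2_inner_cong_AE) (use shift_resolvent[OF t f] Rg f in_L2_shift[OF Rf] in auto)
  finally show ?thesis .
qed

lemma L2_sqnorm_resolvent_le:
  assumes t: "regular t" and f: "in_L2 D f" and c: "c > 0"
    and below: "\<And>w. in_L2 D w \<Longrightarrow> c * L2_sqnorm w \<le> L2_sqnorm (shift t w)"
  shows "L2_sqnorm (resolvent t f) \<le> L2_sqnorm f / c"
proof -
  have "c * L2_sqnorm (resolvent t f) \<le> L2_sqnorm (shift t (resolvent t f))"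
    by (rule below[OF in_L2_resolvent[OF t f]])
  also have "\<dots> = L2_sqnorm f"
    by (rule L2_sqnorm_cong_AE[OF shift_resolvent[OF t f] in_L2_shift[OF in_L2_resolvent[OF t f]] f])
  finally show ?thesis using c by (simp add: field_simps)
qed

lemma resolvent_identity:
  assumes t: "regular t" and t0: "regular t0" and v: "in_L2 D v"
  shows "AE x in lebesgue. resolvent t v x = resolvent t0 v x + (t - t0) * resolvent t (resolvent t0 v) x"
proof -
  note a = in_L2_resolvent[OF t0 v] shift_resolvent[OF t0 v]
  note b = in_L2_resolvent[OF t a(1)] shift_resolvent[OF t a(1)]
  have "AE x in lebesgue. resolvent t v x = 1 * resolvent t0 v x + (t - t0) * resolvent t (resolvent t0 v) x"
  proof (rule resolvent_unique[OF t in_L2_lincomb[OF a(1) b(1)] v])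
    have shift_t: "shift t (resolvent t0 v) x = shift t0 (resolvent t0 v) x - (t - t0) * resolvent t0 v x"
      for x unfolding shift_def by (simp add: algebra_simps)
    show "AE x in lebesgue. shift t (\<lambda>x. 1 * resolvent t0 v x + (t - t0) * resolvent t (resolvent t0 v) x) x = v x"
      unfolding shift_lincomb[OF a(1) b(1)] using a(2) b(2) by eventually_elim (simp add: shift_t algebra_simps)
  qed
  then show ?thesis by simp
qed

lemma bounded_below_nearby:
  assumes below: "\<And>w. in_L2 D w \<Longrightarrow> c * L2_sqnorm w \<le> L2_sqnorm (shift t0 w)"
    and near: "(t - t0)\<^sup>2 \<le> c / 4" and w: "in_L2 D w"
  shows "c / 4 * L2_sqnorm w \<le> L2_sqnorm (shift t w)"
proof -
  have eq: "shift t0 w = (\<lambda>x. shift t w x + (t - t0) * w x)"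
    unfolding shift_def by (auto simp: algebra_simps)
  have "c * L2_sqnorm w \<le> L2_sqnorm (shift t0 w)" by (rule below[OF w])
  also have "\<dots> \<le> 2 * L2_sqnorm (shift t w) + 2 * L2_sqnorm (\<lambda>x. (t - t0) * w x)"
    unfolding eq by (rule L2_sqnorm_add_le[OF in_L2_shift[OF w] in_L2_scale[OF w]])
  also have "L2_sqnorm (\<lambda>x. (t - t0) * w x) \<le> c / 4 * L2_sqnorm w"
    unfolding L2_sqnorm_scale by (rule mult_right_mono[OF near L2_sqnorm_nonneg])
  finally show ?thesis by simp
qed

lemma resolvent_form_diff:
  assumes t: "regular t" and t0: "regular t0" and x: "in_L2 D x"
  shows "L2_inner (resolvent t x) x - L2_inner (resolvent t0 x) x
    = (t - t0) * L2_inner (resolvent t0 x) (resolvent t x)"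
proof -
  define a where "a = resolvent t0 x"
  have a: "in_L2 D a" unfolding a_def by (rule in_L2_resolvent[OF t0 x])
  have "L2_inner (resolvent t x) x = L2_inner (\<lambda>z. 1 * a z + (t - t0) * resolvent t a z) x"
    using resolvent_identity[OF t t0 x] unfolding a_def[symmetric]
    by (intro L2_inner_cong_AE[OF _ _ in_L2_resolvent[OF t x] in_L2_lincomb[OF a in_L2_resolvent[OF t a]] x x])
      auto
  also have "\<dots> = L2_inner a x + (t - t0) * L2_inner a (resolvent t x)"
    using L2_inner_lincomb_left[OF a in_L2_resolvent[OF t a] x, of 1 "t - t0"]
      resolvent_symmetric[OF t a x] by simp
  finally show ?thesis unfolding a_def by simp
qed

lemma L2_inner_resolvent_close:
  assumes t: "regular t" and t0: "regular t0" and x: "in_L2 D x" and c: "c > 0"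
    and below: "\<And>w. in_L2 D w \<Longrightarrow> c * L2_sqnorm w \<le> L2_sqnorm (shift t w)"
  shows "\<bar>L2_inner (resolvent t0 x) (resolvent t x) - L2_sqnorm (resolvent t0 x)\<bar>
    \<le> L2_sqnorm (resolvent t0 x) / sqrt c * \<bar>t - t0\<bar>"
proof -
  define a where "a = resolvent t0 x"
  have a: "in_L2 D a" unfolding a_def by (rule in_L2_resolvent[OF t0 x])
  note Rx = in_L2_resolvent[OF t x]
  have d: "in_L2 D (\<lambda>z. resolvent t x z - a z)" by (rule in_L2_diff[OF Rx a])
  have "L2_sqnorm (\<lambda>z. resolvent t x z - a z) = L2_sqnorm (\<lambda>z. (t - t0) * resolvent t a z)"
    using resolvent_identity[OF t t0 x] unfolding a_def[symmetric]
    by (intro L2_sqnorm_cong_AE[OF _ d in_L2_scale[OF in_L2_resolvent[OF t a]]]) auto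
  also have "\<dots> \<le> (t - t0)\<^sup>2 * (L2_sqnorm a / c)"
    unfolding L2_sqnorm_scale by (intro mult_left_mono L2_sqnorm_resolvent_le[OF t a c below]) auto
  finally have diff: "L2_sqnorm (\<lambda>z. resolvent t x z - a z) \<le> (t - t0)\<^sup>2 * (L2_sqnorm a / c)" .
  have "(L2_inner a (resolvent t x) - L2_sqnorm a)\<^sup>2 = (L2_inner a (\<lambda>z. resolvent t x z - a z))\<^sup>2"
    using L2_inner_lincomb_right[OF Rx a a, of 1 "-1"] by simp
  also have "\<dots> \<le> L2_sqnorm a * L2_sqnorm (\<lambda>z. resolvent t x z - a z)"
    by (rule L2_Cauchy_Schwarz[OF a d])
  also have "\<dots> \<le> L2_sqnorm a * ((t - t0)\<^sup>2 * (L2_sqnorm a / c))"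
    by (rule mult_left_mono[OF diff L2_sqnorm_nonneg])
  also have "\<dots> = (L2_sqnorm a / sqrt c * \<bar>t - t0\<bar>)\<^sup>2"
  proof -
    have "(L2_sqnorm a / sqrt c * \<bar>t - t0\<bar>)\<^sup>2 = (L2_sqnorm a)\<^sup>2 / c * (t - t0)\<^sup>2"
      using c by (simp add: power_mult_distrib power_divide)
    moreover have "L2_sqnorm a * (e * (L2_sqnorm a / c)) = (L2_sqnorm a)\<^sup>2 / c * e" for e
      by (simp add: power2_eq_square)
    ultimately show ?thesis by (simp only:)
  qed
  finally have "\<bar>L2_inner a (resolvent t x) - L2_sqnorm a\<bar>\<^sup>2 \<le> (L2_sqnorm a / sqrt c * \<bar>t - t0\<bar>)\<^sup>2"
    by simp
  then show ?thesis
    unfolding a_def[symmetric] by (rule power2_le_imp_le) (use c L2_sqnorm_nonneg[of a] in simp)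
qed

lemma resolvent_form_has_derivative:
  assumes regular: "\<And>t. \<bar>t - \<mu>\<bar> < r \<Longrightarrow> regular t" and below: "bounded_below t0"
    and t0: "\<bar>t0 - \<mu>\<bar> < r" and x: "in_L2 D x"
  shows "DERIV (\<lambda>t. L2_inner (resolvent t x) x) t0 :> L2_sqnorm (resolvent t0 x)"
proof -
  obtain c where c: "c > 0" "\<And>w. in_L2 D w \<Longrightarrow> c * L2_sqnorm w \<le> L2_sqnorm (shift t0 w)"
    using below unfolding bounded_below_def by blast
  define a where "a = resolvent t0 x"
  define K where "K = L2_sqnorm a / sqrt (c / 4)"
  have near: "\<forall>\<^sub>F t in at t0. \<bar>t - \<mu>\<bar> < r \<and> (t - t0)\<^sup>2 \<le> c / 4"
  proof -
    have "\<forall>\<^sub>F t in at t0. \<bar>t - t0\<bar> < min (r - \<bar>t0 - \<mu>\<bar>) (sqrt (c / 4))"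
      using eventually_at_ball[of "min (r - \<bar>t0 - \<mu>\<bar>) (sqrt (c / 4))" t0 UNIV] t0 c
      by (simp add: dist_real_def abs_minus_commute)
    then show ?thesis
    proof eventually_elim
      case (elim t)
      then have "\<bar>t - t0\<bar>\<^sup>2 \<le> (sqrt (c / 4))\<^sup>2" by (intro power_mono) auto
      moreover have "\<bar>t - \<mu>\<bar> < r" using elim by linarith
      ultimately show ?case using c by simp
    qed
  qed
  have "((\<lambda>t. L2_inner a (resolvent t x) - L2_sqnorm a) \<longlongrightarrow> 0) (at t0)"
  proof (rule Lim_null_comparison[where g = "\<lambda>t. K * \<bar>t - t0\<bar>"])
    show "\<forall>\<^sub>F t in at t0. norm (L2_inner a (resolvent t x) - L2_sqnorm a) \<le> K * \<bar>t - t0\<bar>"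
      using near
    proof eventually_elim
      case (elim t)
      then show ?case
        unfolding a_def K_def
        using L2_inner_resolvent_close[OF regular regular[OF t0] x, of t "c / 4"]
          bounded_below_nearby[OF c(2)] c(1) by (simp add: mult.commute)
    qed
    have "((\<lambda>t. K * \<bar>t - t0\<bar>) \<longlongrightarrow> K * \<bar>t0 - t0\<bar>) (at t0)"
      by (intro tendsto_intros)
    then show "((\<lambda>t. K * \<bar>t - t0\<bar>) \<longlongrightarrow> 0) (at t0)" by simp
  qed
  then have "((\<lambda>t. L2_inner a (resolvent t x)) \<longlongrightarrow> L2_sqnorm a) (at t0)"
    using LIM_zero_iff by blast
  moreover have "\<forall>\<^sub>F t in at t0. L2_inner a (resolvent t x)
      = (L2_inner (resolvent t x) x - L2_inner (resolvent t0 x) x) / (t - t0)"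
    using near eventually_neq_at_within[where x = t0 and z = t0 and A = UNIV]
    by eventually_elim (auto simp: a_def resolvent_form_diff[OF regular regular[OF t0] x])
  ultimately show ?thesis
    unfolding has_field_derivative_iff a_def by (rule Lim_transform_eventually)
qed

lemma L2_sqnorm_resolvent_le_if_form_bound:
  assumes t: "regular t" and r: "r > 0"
    and form: "\<And>y. in_L2 D y \<Longrightarrow> \<bar>L2_inner (resolvent t y) y\<bar> \<le> L2_sqnorm y / r"
    and f: "in_L2 D f"
  shows "L2_sqnorm (resolvent t f) \<le> L2_sqnorm f / r\<^sup>2"
proof -
  note Rf = in_L2_resolvent[OF t f]
  define y where "y z = r * resolvent t f z" for z
  have y: "in_L2 D y" unfolding y_def by (rule in_L2_scale[OF Rf])
  note Ry = in_L2_resolvent[OF t y]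
  define N where "N = L2_sqnorm (resolvent t f)"
  \<comment> \<open>Polarisation: the form of \<open>f \<plusminus> y\<close> controls \<open>L2_inner (resolvent t f) y = r * N\<close>.\<close>
  have form_pm: "L2_inner (resolvent t (\<lambda>z. f z + s * y z)) (\<lambda>z. f z + s * y z)
      = L2_inner (resolvent t f) f + 2 * s * (r * N) + s\<^sup>2 * L2_inner (resolvent t y) y"
    for s
  proof -
    have fy: "in_L2 D (\<lambda>z. 1 * f z + s * y z)" by (rule in_L2_lincomb[OF f y])
    have "L2_inner (resolvent t (\<lambda>z. 1 * f z + s * y z)) (\<lambda>z. 1 * f z + s * y z)
        = L2_inner (\<lambda>z. 1 * resolvent t f z + s * resolvent t y z) (\<lambda>z. 1 * f z + s * y z)"
      by (rule L2_inner_cong_AE[OF resolvent_lincomb[OF t f y]])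
        (use in_L2_resolvent[OF t fy] in_L2_lincomb[OF Rf Ry, of 1 s] fy in auto)
    also have "\<dots> = L2_inner (resolvent t f) f + s * L2_inner (resolvent t f) y
        + s * (L2_inner (resolvent t y) f + s * L2_inner (resolvent t y) y)"
      using L2_inner_lincomb_left[OF Rf Ry fy, of 1 s] L2_inner_lincomb_right[OF f y Rf, of 1 s]
        L2_inner_lincomb_right[OF f y Ry, of 1 s] by simp
    also have "L2_inner (resolvent t y) f = L2_inner (resolvent t f) y"
      unfolding resolvent_symmetric[OF t y f] by (rule L2_inner_commute)
    also have "L2_inner (resolvent t f) y = r * N"
      unfolding y_def N_def using L2_inner_lincomb_right[OF Rf Rf Rf, of r 0] by simp
    finally show ?thesis by (simp add: algebra_simps power2_eq_square)
  qed
  have sqnorm_pm: "L2_sqnorm (\<lambda>z. f z + s * y z) = L2_sqnorm f + 2 * s * L2_inner f y + s\<^sup>2 * L2_sqnorm y"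
    for s
    using L2_sqnorm_diff_scale[OF f y, of "-s"] by simp
  have "4 * (r * N) = L2_inner (resolvent t (\<lambda>z. f z + 1 * y z)) (\<lambda>z. f z + 1 * y z)
      - L2_inner (resolvent t (\<lambda>z. f z + (-1) * y z)) (\<lambda>z. f z + (-1) * y z)"
    unfolding form_pm by simp
  also have "\<dots> \<le> L2_sqnorm (\<lambda>z. f z + 1 * y z) / r + L2_sqnorm (\<lambda>z. f z + (-1) * y z) / r"
    using form[OF in_L2_lincomb[OF f y, of 1 1]] form[OF in_L2_lincomb[OF f y, of 1 "-1"]]
    by (simp only: mult_1 abs_le_iff) linarith
  also have "\<dots> = (2 * L2_sqnorm f + 2 * L2_sqnorm y) / r"
    unfolding sqnorm_pm by (simp add: add_divide_distrib[symmetric])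
  also have "L2_sqnorm y = r\<^sup>2 * N"
    unfolding y_def N_def by (rule L2_sqnorm_scale)
  finally have "4 * (r * N) * r \<le> 2 * L2_sqnorm f + 2 * (r\<^sup>2 * N)"
    using r by (simp add: pos_le_divide_eq)
  then have "r\<^sup>2 * N \<le> L2_sqnorm f"
    by (simp add: power2_eq_square algebra_simps)
  then show ?thesis unfolding N_def using r by (simp add: field_simps)
qed

lemma sqnorm_shift_ge_if_regular_interval:
  assumes r: "r > 0" and regular: "\<And>t. \<bar>t - \<mu>\<bar> < r \<Longrightarrow> regular t \<and> bounded_below t"
    and v: "in_L2 D v"
  shows "r\<^sup>2 * L2_sqnorm v \<le> L2_sqnorm (shift \<mu> v)"
proof -
  have \<mu>: "regular \<mu>" using regular[of \<mu>] r by simp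
  \<comment> \<open>The form \<open>g(t) = L2_inner (resolvent t y) y\<close> satisfies
    \<open>g' = L2_sqnorm (resolvent t y) \<ge> g\<^sup>2 / L2_sqnorm y\<close>.\<close>
  have form: "\<bar>L2_inner (resolvent \<mu> y) y\<bar> \<le> L2_sqnorm y / r" if y: "in_L2 D y" for y
  proof (cases "L2_sqnorm y = 0")
    case True
    then show ?thesis
      using L2_Cauchy_Schwarz[OF in_L2_resolvent[OF \<mu> y] y] by simp
  next
    case False
    then have \<nu>: "L2_sqnorm y > 0" using L2_sqnorm_nonneg[of y] by linarith
    show ?thesis
    proof (rule Riccati_bound[OF r \<nu>, where g = "\<lambda>t. L2_inner (resolvent t y) y"])
      fix t assume t: "\<bar>t - \<mu>\<bar> < r"
      show "DERIV (\<lambda>t. L2_inner (resolvent t y) y) t :> L2_sqnorm (resolvent t y)"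
        by (rule resolvent_form_has_derivative[OF _ _ t y]) (use regular t in auto)
      show "(L2_inner (resolvent t y) y)\<^sup>2 \<le> L2_sqnorm y * L2_sqnorm (resolvent t y)"
        using L2_Cauchy_Schwarz[OF in_L2_resolvent[OF _ y] y] regular[OF t] by (simp add: mult.commute)
    qed
  qed
  have "L2_sqnorm v = L2_sqnorm (resolvent \<mu> (shift \<mu> v))"
    by (rule L2_sqnorm_cong_AE[OF _ v in_L2_resolvent[OF \<mu> in_L2_shift[OF v]]])
      (use resolvent_shift[OF \<mu> v] in auto)
  also have "\<dots> \<le> L2_sqnorm (shift \<mu> v) / r\<^sup>2"
    by (rule L2_sqnorm_resolvent_le_if_form_bound[OF \<mu> r form in_L2_shift[OF v]])
  finally show ?thesis using r by (simp add: field_simps)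
qed

lemma approximate_eigenfunctions_if_not_bounded_below:
  assumes "\<not> bounded_below t"
  obtains w where "\<And>n. in_L2 D (w n)" "\<And>n. L2_sqnorm (w n) = 1"
    "(\<lambda>n. L2_sqnorm (shift t (w n))) \<longlonglongrightarrow> 0"
proof -
  have "\<forall>n::nat. \<exists>w. in_L2 D w \<and> L2_sqnorm (shift t w) < 1 / real (Suc n) * L2_sqnorm w"
    using assms unfolding bounded_below_def by (metis not_le of_nat_0_less_iff zero_less_Suc zero_less_divide_1_iff)
  then obtain W where W: "\<And>n. in_L2 D (W n)"
    "\<And>n. L2_sqnorm (shift t (W n)) < 1 / real (Suc n) * L2_sqnorm (W n)"
    by metis
  have W_pos: "L2_sqnorm (W n) > 0" for n
    using W(2)[of n] L2_sqnorm_nonneg[of "W n"] L2_sqnorm_nonneg[of "shift t (W n)"]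
    by (cases "L2_sqnorm (W n) = 0") auto
  define w where "w n = (\<lambda>x. 1 / sqrt (L2_sqnorm (W n)) * W n x)" for n
  have sqnorm_w: "L2_sqnorm (w n) = 1" for n
    unfolding w_def L2_sqnorm_scale using W_pos[of n] by (simp add: power_divide)
  have "L2_sqnorm (shift t (w n)) = L2_sqnorm (shift t (W n)) / L2_sqnorm (W n)" for n
    unfolding w_def shift_scale[OF W(1)] L2_sqnorm_scale
    using W_pos[of n] by (simp add: power_divide)
  then have "L2_sqnorm (shift t (w n)) \<le> 1 / real (Suc n)" for n
    using W(2)[of n] W_pos[of n] by (simp add: divide_le_eq less_imp_le)
  then have "(\<lambda>n. L2_sqnorm (shift t (w n))) \<longlonglongrightarrow> 0"
    by (intro Lim_null_comparison[OF always_eventually LIMSEQ_Suc[OF lim_inverse_n']])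
      (simp add: L2_sqnorm_nonneg)
  moreover have "in_L2 D (w n)" for n unfolding w_def by (rule in_L2_scale[OF W(1)])
  ultimately show ?thesis using that sqnorm_w by blast
qed

lemma L2_tendsto_if_shift_tendsto:
  assumes l: "l \<noteq> 0" and z: "in_L2 D z" and w: "\<And>n. in_L2 D (w n)"
    and T_lim: "(\<lambda>n. L2_sqnorm (\<lambda>x. T (w n) x - l * z x)) \<longlonglongrightarrow> 0"
    and shift_lim: "(\<lambda>n. L2_sqnorm (shift l (w n))) \<longlonglongrightarrow> 0"
  shows "(\<lambda>n. L2_sqnorm (\<lambda>x. w n x - z x)) \<longlonglongrightarrow> 0"
proof -
  have bound: "L2_sqnorm (\<lambda>x. w n x - z x)
      \<le> (1 / l)\<^sup>2 * (2 * L2_sqnorm (\<lambda>x. T (w n) x - l * z x) + 2 * L2_sqnorm (shift l (w n)))" for n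
  proof -
    have "w n x - z x = 1 / l * ((T (w n) x - l * z x) - shift l (w n) x)" for x
      using l by (simp add: shift_def field_simps)
    then have "L2_sqnorm (\<lambda>x. w n x - z x)
        = (1 / l)\<^sup>2 * L2_sqnorm (\<lambda>x. (T (w n) x - l * z x) - shift l (w n) x)"
      by (simp only: L2_sqnorm_scale[symmetric])
    also have "\<dots> \<le> (1 / l)\<^sup>2 * (2 * L2_sqnorm (\<lambda>x. T (w n) x - l * z x) + 2 * L2_sqnorm (shift l (w n)))"
      by (intro mult_left_mono L2_sqnorm_diff_le[OF in_L2_diff[OF in_L2_T[OF w] in_L2_scale[OF z]]
            in_L2_shift[OF w]]) auto
    finally show ?thesis .
  qed
  have "(\<lambda>n. (1 / l)\<^sup>2 * (2 * L2_sqnorm (\<lambda>x. T (w n) x - l * z x) + 2 * L2_sqnorm (shift l (w n))))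
      \<longlonglongrightarrow> (1 / l)\<^sup>2 * (2 * 0 + 2 * 0)"
    by (rule tendsto_mult[OF tendsto_const tendsto_add[OF tendsto_mult[OF tendsto_const T_lim]
          tendsto_mult[OF tendsto_const shift_lim]]])
  then have "(\<lambda>n. (1 / l)\<^sup>2 * (2 * L2_sqnorm (\<lambda>x. T (w n) x - l * z x) + 2 * L2_sqnorm (shift l (w n))))
      \<longlonglongrightarrow> 0"
    by simp
  then show ?thesis
    by (rule Lim_null_comparison[rotated]) (auto intro!: always_eventually simp: bound L2_sqnorm_nonneg)
qed

end

context kernel_operator
begin

sublocale symmetric_L2_operator D JU
  by unfold_locales (simp_all add: in_L2_JU JU_lincomb JU_symmetric)

lemma L2_sqnorm_shift_le:
  assumes "in_L2 D u"
  shows "L2_sqnorm (shift t u) \<le> (2 * (J 0 * measure lebesgue D)\<^sup>2 + 2 * t\<^sup>2) * L2_sqnorm u"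
proof -
  have "L2_sqnorm (shift t u) \<le> 2 * L2_sqnorm (JU u) + 2 * L2_sqnorm (\<lambda>x. t * u x)"
    unfolding shift_def by (rule L2_sqnorm_diff_le[OF in_L2_JU[OF assms] in_L2_scale[OF assms]])
  then show ?thesis
    using L2_sqnorm_JU_le[OF assms] by (simp add: L2_sqnorm_scale algebra_simps)
qed

lemma J_conv_subsequence_uniform_limit:
  assumes w: "\<And>n. in_L2 D (w n)" and B: "\<And>n. L1_norm (w n) \<le> B"
  obtains g k where "continuous_on (closure D) g" "strict_mono (k :: nat \<Rightarrow> nat)"
    "\<And>e. 0 < e \<Longrightarrow> \<exists>N. \<forall>n x. n \<ge> N \<and> x \<in> closure D \<longrightarrow> \<bar>J_conv (w (k n)) x - g x\<bar> < e"
proof (rule Arzela_Ascoli[of "closure D" "\<lambda>n. J_conv (w n)" "J 0 * B"])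
  show "compact (closure D)" using bounded_D compact_closure by blast
  show "norm (J_conv (w n) x) \<le> J 0 * B" for n x
    using J_conv_bound[OF w, of n x] B[of n] J_nonneg[of 0] by (simp add: order_trans mult_left_mono)
  fix x and e :: real assume "0 < e"
  have B0: "0 \<le> B" using B[of 0] L1_norm_nonneg[of "w 0"] by linarith
  define e' where "e' = e / (B + 1)"
  have e': "0 < e'" unfolding e'_def using \<open>0 < e\<close> B0 by simp
  obtain d where d: "d > 0" "\<And>x'. dist x' x < d \<Longrightarrow> \<forall>y\<in>U. \<bar>J (x - y) - J (x' - y)\<bar> < e'"
    using J_translate_equicontinuous[OF e', of x] by blast
  have "norm (J_conv (w n) x - J_conv (w n) y) < e" if "norm (x - y) < d" for n y
  proof -
    have "\<forall>z\<in>U. \<bar>J (x - z) - J (y - z)\<bar> \<le> e'"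
      using d(2)[of y] that by (simp add: dist_norm norm_minus_commute less_imp_le)
    then have "\<bar>J_conv (w n) x - J_conv (w n) y\<bar> \<le> e' * L1_norm (w n)"
      using J_conv_diff_bound[OF w, of e' x y] e' by auto
    also have "\<dots> \<le> e' * B" using B[of n] e' by (simp add: mult_left_mono)
    also have "\<dots> < e" unfolding e'_def using \<open>0 < e\<close> B0 by (simp add: field_simps)
    finally show ?thesis by simp
  qed
  then show "\<exists>d>0. \<forall>n y. y \<in> closure D \<and> norm (x - y) < d \<longrightarrow> norm (J_conv (w n) x - J_conv (w n) y) < e"
    using d(1) by blast
qed (use that in auto)

lemma in_L2_indicator_U_mult:
  assumes g: "continuous_on (closure D) g"
  shows "in_L2 D (\<lambda>x. indicator U x * g x)"
proof -
  have U_closure: "U \<subseteq> closure D" using U_subset closure_subset by blast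
  have "bounded (g ` closure D)"
    using compact_imp_bounded compact_continuous_image[OF g] bounded_D compact_closure by blast
  then obtain M where M: "\<And>x. x \<in> closure D \<Longrightarrow> \<bar>g x\<bar> \<le> M"
    unfolding bounded_iff by auto
  show ?thesis
  proof (rule in_L2_if_bounded[of _ "\<bar>M\<bar>"])
    have "(\<lambda>x. indicator U x *\<^sub>R g x) \<in> borel_measurable borel"
      by (rule borel_measurable_continuous_on_indicator)
        (use open_U continuous_on_subset[OF g U_closure] in auto)
    then show "(\<lambda>x. indicator U x * g x) \<in> borel_measurable lebesgue"
      using measurable_lebesgue_if_borel by simp
    show "\<bar>indicator U x * g x\<bar> \<le> \<bar>M\<bar>" for x
      using M[of x] U_closure by (cases "x \<in> U") auto
    show "x \<notin> D \<Longrightarrow> indicator U x * g x = 0" for x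
      using U_subset by (auto simp: indicator_def)
  qed
qed

lemma approximate_eigenfunctions_converge:
  assumes l: "l \<noteq> 0" and w: "\<And>n. in_L2 D (w n)" "\<And>n. L2_sqnorm (w n) = 1"
    and lim: "(\<lambda>n. L2_sqnorm (shift l (w n))) \<longlonglongrightarrow> 0"
  shows "\<exists>z k. in_L2 D z \<and> strict_mono (k :: nat \<Rightarrow> nat) \<and>
    (\<lambda>n. L2_sqnorm (\<lambda>x. w (k n) x - z x)) \<longlonglongrightarrow> 0"
proof -
  have L1: "L1_norm (w n) \<le> sqrt (measure lebesgue D)" for n
    using L1_norm_square_le[OF w(1)] w(2) by (simp add: real_le_rsqrt)
  obtain g k where g: "continuous_on (closure D) g" and k: "strict_mono (k :: nat \<Rightarrow> nat)"
    and unif: "\<And>e. 0 < e \<Longrightarrow> \<exists>N. \<forall>n x. n \<ge> N \<and> x \<in> closure D \<longrightarrow> \<bar>J_conv (w (k n)) x - g x\<bar> < e"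
    using J_conv_subsequence_uniform_limit[where w = w, OF w(1) L1] by metis
  define z where "z x = 1 / l * (indicator U x * g x)" for x
  have z: "in_L2 D z" unfolding z_def by (rule in_L2_scale[OF in_L2_indicator_U_mult[OF g]])
  have "\<exists>N. \<forall>n\<ge>N. \<forall>x\<in>D. \<bar>JU (w (k n)) x - l * z x\<bar> \<le> e" if e: "0 < e" for e
  proof -
    obtain N where N: "\<And>n x. n \<ge> N \<Longrightarrow> x \<in> closure D \<Longrightarrow> \<bar>J_conv (w (k n)) x - g x\<bar> < e"
      using unif[OF e] by blast
    have "JU (w (k n)) x - l * z x = indicator U x * (J_conv (w (k n)) x - g x)" for n x
      using l by (simp add: JU_def z_def algebra_simps)
    moreover have "\<bar>J_conv (w (k n)) x - g x\<bar> \<le> e" if "n \<ge> N" "x \<in> D" for n x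
      using N[OF that(1), of x] that(2) closure_subset[of D] by force
    ultimately have "\<bar>JU (w (k n)) x - l * z x\<bar> \<le> e" if "n \<ge> N" "x \<in> D" for n x
      using that e by (cases "x \<in> U") auto
    then show ?thesis by blast
  qed
  then have "(\<lambda>n. L2_sqnorm (\<lambda>x. JU (w (k n)) x - l * z x)) \<longlonglongrightarrow> 0"
    by (intro L2_sqnorm_tendsto_0_if_uniformly_small in_L2_diff in_L2_JU in_L2_scale w z)
  moreover have "(\<lambda>n. L2_sqnorm (shift l (w (k n)))) \<longlonglongrightarrow> 0"
    using LIMSEQ_subseq_LIMSEQ[OF lim k] by (simp add: o_def)
  ultimately have "(\<lambda>n. L2_sqnorm (\<lambda>x. w (k n) x - z x)) \<longlonglongrightarrow> 0"
    by (rule L2_tendsto_if_shift_tendsto[OF l z w(1)])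
  then show ?thesis using z k by blast
qed

lemma L2_sqnorm_shift_limit:
  assumes z: "in_L2 D z" and w: "\<And>n. in_L2 D (w n)"
    and conv: "(\<lambda>n. L2_sqnorm (\<lambda>x. w n x - z x)) \<longlonglongrightarrow> 0"
    and lim: "(\<lambda>n. L2_sqnorm (shift t (w n))) \<longlonglongrightarrow> 0"
  shows "L2_sqnorm (shift t z) = 0"
proof -
  define C where "C = 2 * (J 0 * measure lebesgue D)\<^sup>2 + 2 * t\<^sup>2"
  have "L2_sqnorm (shift t z) \<le> 2 * (C * L2_sqnorm (\<lambda>x. w n x - z x)) + 2 * L2_sqnorm (shift t (w n))"
    for n
  proof -
    have "shift t z = (\<lambda>x. shift t (\<lambda>y. z y - w n y) x + shift t (w n) x)"
      using shift_lincomb[OF z w, of t 1 "-1"] by (auto simp: fun_eq_iff)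
    then have "L2_sqnorm (shift t z)
        \<le> 2 * L2_sqnorm (shift t (\<lambda>y. z y - w n y)) + 2 * L2_sqnorm (shift t (w n))"
      using L2_sqnorm_add_le[OF in_L2_shift[OF in_L2_diff[OF z w]] in_L2_shift[OF w]] by simp
    also have "L2_sqnorm (shift t (\<lambda>y. z y - w n y)) \<le> C * L2_sqnorm (\<lambda>x. w n x - z x)"
      unfolding C_def L2_sqnorm_diff_commute[of "w n"]
      by (rule L2_sqnorm_shift_le[OF in_L2_diff[OF z w]])
    finally show ?thesis by simp
  qed
  then have "L2_sqnorm (shift t z) \<le> 2 * (C * 0) + 2 * 0"
    by (intro tendsto_lowerbound[OF tendsto_add[OF tendsto_mult[OF tendsto_const tendsto_mult[OF
          tendsto_const conv]] tendsto_mult[OF tendsto_const lim]] always_eventually]) auto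
  then show ?thesis using L2_sqnorm_nonneg[of "shift t z"] by simp
qed

lemma bounded_below_if_regular:
  assumes t: "t \<noteq> 0" "regular t"
  shows "bounded_below t"
proof (rule ccontr)
  assume "\<not> bounded_below t"
  then obtain w where w: "\<And>n. in_L2 D (w n)" "\<And>n. L2_sqnorm (w n) = 1"
    and lim: "(\<lambda>n. L2_sqnorm (shift t (w n))) \<longlonglongrightarrow> 0"
    using approximate_eigenfunctions_if_not_bounded_below by metis
  obtain z k where z: "in_L2 D z" and k: "strict_mono (k :: nat \<Rightarrow> nat)"
    and conv: "(\<lambda>n. L2_sqnorm (\<lambda>x. w (k n) x - z x)) \<longlonglongrightarrow> 0"
    using approximate_eigenfunctions_converge[where w = w, OF t(1) w lim] by blast
  have "1 \<le> 2 * L2_sqnorm z + 2 * L2_sqnorm (\<lambda>x. w (k n) x - z x)" for n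
    using L2_sqnorm_add_le[OF z in_L2_diff[OF w(1) z], of "k n"] w(2)[of "k n"] by simp
  then have z_large: "1 \<le> 2 * L2_sqnorm z + 2 * 0"
    by (intro tendsto_lowerbound[OF tendsto_add[OF tendsto_const tendsto_mult[OF tendsto_const conv]]
          always_eventually]) auto
  have "(\<lambda>n. L2_sqnorm (shift t (w (k n)))) \<longlonglongrightarrow> 0"
    using LIMSEQ_subseq_LIMSEQ[OF lim k] by (simp add: o_def)
  then have "L2_sqnorm (shift t z) = 0"
    by (rule L2_sqnorm_shift_limit[OF z w(1) conv])
  then have "AE x in lebesgue. JU z x = t * z x"
    using L2_sqnorm_eq_0_iff[OF in_L2_shift[OF z]] by (auto elim: eventually_mono simp: shift_def)
  moreover have "\<And>w. in_L2 D w \<Longrightarrow> (AE x in lebesgue. JU w x = t * w x) \<Longrightarrow> (AE x in lebesgue. w x = 0)"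
    using t(2) unfolding regular_def by blast
  ultimately have "AE x in lebesgue. z x = 0"
    using z by blast
  then show False
    using z_large L2_sqnorm_eq_0_iff[OF z] by simp
qed

end

section \<open>Spectral values of \<open>J\<^sub>U\<close>\<close>

lemma small_ball_in_open:
  fixes x :: "'a::euclidean_space"
  assumes "open U" "x \<in> U" "0 < \<epsilon>"
  shows "\<exists>r. ball x r \<subseteq> U \<and> emeasure lebesgue (ball x r) \<noteq> 0 \<and>
    emeasure lebesgue (ball x r) \<le> ennreal \<epsilon>"
proof -
  obtain \<rho> where \<rho>: "\<rho> > 0" "ball x \<rho> \<subseteq> U" using openE[OF assms(1,2)] by blast
  define V where "V = measure lborel (ball (0::'a) 1)"
  have V: "V > 0" unfolding V_def by (rule content_ball_pos) simp
  define r where "r = min \<rho> (min 1 (\<epsilon> / (V + 1)))"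
  have r: "0 < r" "r \<le> \<rho>" "r \<le> 1" "r \<le> \<epsilon> / (V + 1)"
    unfolding r_def using \<rho> V assms(3) by auto
  have measure_ball: "emeasure lebesgue (ball x r) = ennreal (r ^ DIM('a) * V)"
    using emeasure_lborel_ball_finite[of x r] content_ball_conv_unit_ball[of r x] r(1)
    by (simp add: emeasure_eq_ennreal_measure V_def)
  have "r ^ DIM('a) \<le> r ^ 1"
    by (rule power_decreasing) (use r DIM_positive in \<open>auto simp: Suc_le_eq\<close>)
  then have "r ^ DIM('a) * V \<le> \<epsilon> / (V + 1) * V"
    using r(4) V by (intro mult_right_mono) auto
  also have "\<dots> \<le> \<epsilon>" using V assms(3) by (simp add: field_simps)
  finally have "emeasure lebesgue (ball x r) \<le> ennreal \<epsilon>"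
    unfolding measure_ball by (rule ennreal_leI)
  moreover have "ball x r \<subseteq> U" using r(2) \<rho>(2) by auto
  moreover have "emeasure lebesgue (ball x r) \<noteq> 0"
    unfolding measure_ball using r(1) V by simp
  ultimately show ?thesis by blast
qed

lemma nn_integral_weighted_indicators_le:
  assumes E [measurable]: "\<And>k. E k \<in> sets M" and small: "\<And>k::nat. emeasure M (E k) \<le> ennreal ((1/4)^k)"
  shows "(\<integral>\<^sup>+x. (\<Sum>k. ennreal (2^k) * indicator (E k) x) \<partial>M) \<le> 2"
proof -
  have "(\<integral>\<^sup>+x. (\<Sum>k. ennreal (2^k) * indicator (E k) x) \<partial>M)
      = (\<Sum>k. \<integral>\<^sup>+x. ennreal (2^k) * indicator (E k) x \<partial>M)"
    by (rule nn_integral_suminf) measurable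
  also have "\<dots> = (\<Sum>k. ennreal (2^k) * emeasure M (E k))"
    by (simp add: nn_integral_cmult_indicator)
  also have "\<dots> \<le> (\<Sum>k. ennreal ((1/2)^k))"
  proof (rule suminf_le)
    fix k :: nat
    have "ennreal (2^k) * emeasure M (E k) \<le> ennreal (2^k) * ennreal ((1/4)^k)"
      by (rule mult_left_mono[OF small]) simp
    also have "\<dots> = ennreal ((1/2)^k)"
      by (simp add: ennreal_mult'[symmetric] power_mult_distrib[symmetric])
    finally show "ennreal (2^k) * emeasure M (E k) \<le> ennreal ((1/2)^k)" .
  qed auto
  also have "\<dots> = ennreal (\<Sum>k. (1/2::real)^k)"
    by (rule suminf_ennreal2) (auto intro: summable_geometric)
  also have "(\<Sum>k. (1/2::real)^k) = 2"
    using suminf_geometric[of "1/2::real"] by simp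
  finally show ?thesis by simp
qed

context bounded_domain
begin

lemma in_L2_large_on_small_sets:
  assumes E: "\<And>k. E k \<subseteq> D" "\<And>k. E k \<in> sets lebesgue"
    "\<And>k::nat. emeasure lebesgue (E k) \<le> ennreal ((1/4)^k)"
  shows "\<exists>f. in_L2 D f \<and> (\<forall>k. AE x in lebesgue. x \<in> E k \<longrightarrow> sqrt (2^k) \<le> f x)"
proof -
  note [measurable] = E(2)
  define F where "F x = (\<Sum>k. ennreal (2^k) * indicator (E k) x)" for x
  have F_measurable [measurable]: "F \<in> borel_measurable lebesgue" unfolding F_def by measurable
  have F_integral: "(\<integral>\<^sup>+x. F x \<partial>lebesgue) \<le> 2"
    unfolding F_def by (rule nn_integral_weighted_indicators_le[OF E(2,3)])
  then have F_finite: "AE x in lebesgue. F x \<noteq> \<infinity>"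
    by (intro nn_integral_PInf_AE[OF F_measurable]) (auto simp: top_unique)
  define f where "f x = sqrt (enn2real (F x))" for x
  have "in_L2 D f"
    unfolding in_L2_def
  proof (intro conjI allI impI)
    show "f \<in> borel_measurable lebesgue" unfolding f_def by measurable
    have "integrable lebesgue (\<lambda>x. enn2real (F x))"
      unfolding integrable_iff_bounded
    proof
      have "(\<integral>\<^sup>+x. ennreal (norm (enn2real (F x))) \<partial>lebesgue) \<le> (\<integral>\<^sup>+x. F x \<partial>lebesgue)"
        by (intro nn_integral_mono) (simp add: ennreal_enn2real_if)
      then show "(\<integral>\<^sup>+x. ennreal (norm (enn2real (F x))) \<partial>lebesgue) < \<infinity>"
        using F_integral by (simp add: le_less_trans)
    qed measurable
    then show "integrable lebesgue (\<lambda>x. (f x)\<^sup>2)" unfolding f_def by simp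
    fix x assume "x \<notin> D"
    then have "x \<notin> E k" for k using E(1) by blast
    then show "f x = 0" unfolding f_def F_def by simp
  qed
  moreover have "AE x in lebesgue. x \<in> E k \<longrightarrow> sqrt (2^k) \<le> f x" for k
    using F_finite
  proof eventually_elim
    case (elim x)
    show ?case
    proof
      assume "x \<in> E k"
      then have "ennreal (2^k) \<le> F x"
        using sum_le_suminf[of "\<lambda>j. ennreal (2^j) * indicator (E j) x" "{k}"] unfolding F_def by simp
      then have "2^k \<le> enn2real (F x)"
        using enn2real_mono[of "ennreal (2^k)" "F x"] elim by (simp add: less_top)
      then show "sqrt (2^k) \<le> f x" unfolding f_def by simp
    qed
  qed
  ultimately show ?thesis by blast
qed

lemma in_L2_essentially_unbounded_on_open:
  assumes U: "open U" "U \<noteq> {}" "U \<subseteq> D"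
  obtains f where "in_L2 D f" "\<And>M. \<not> (AE x in lebesgue. x \<in> U \<longrightarrow> f x \<le> M)"
proof -
  obtain x0 where x0: "x0 \<in> U" using U(2) by blast
  have "\<forall>k::nat. \<exists>r. ball x0 r \<subseteq> U \<and> emeasure lebesgue (ball x0 r) \<noteq> 0
      \<and> emeasure lebesgue (ball x0 r) \<le> ennreal ((1/4)^k)"
    using small_ball_in_open[OF U(1) x0] by simp
  then obtain r where r: "\<And>k. ball x0 (r k) \<subseteq> U" "\<And>k. emeasure lebesgue (ball x0 (r k)) \<noteq> 0"
    "\<And>k::nat. emeasure lebesgue (ball x0 (r k)) \<le> ennreal ((1/4)^k)"
    by metis
  obtain f where f: "in_L2 D f" "\<And>k. AE x in lebesgue. x \<in> ball x0 (r k) \<longrightarrow> sqrt (2^k) \<le> f x"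
    using in_L2_large_on_small_sets[of "\<lambda>k. ball x0 (r k)"] r(1,3) U(3) by fastforce
  have "\<not> (AE x in lebesgue. x \<in> U \<longrightarrow> f x \<le> M)" for M
  proof
    assume bounded: "AE x in lebesgue. x \<in> U \<longrightarrow> f x \<le> M"
    obtain k :: nat where k: "M\<^sup>2 < 2^k" using real_arch_pow[of 2 "M\<^sup>2"] by auto
    then have M: "M < sqrt (2^k)"
      using real_sqrt_less_mono[OF k] real_sqrt_abs[of M] by linarith
    have "AE x in lebesgue. x \<notin> ball x0 (r k)"
      using bounded f(2)[of k] by eventually_elim (use M r(1)[of k] in auto)
    then have "emeasure lebesgue (ball x0 (r k)) = 0"
      by (subst AE_iff_measurable[symmetric]) auto
    then show False using r(2) by blast
  qed
  then show ?thesis using that f(1) by blast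
qed

end

context kernel_operator
begin

lemma JU_outside: "x \<notin> U \<Longrightarrow> JU u x = 0"
  by (simp add: JU_def)

lemma regular_if_not_in_spectrum:
  assumes "\<not> in_spectrum J U D t"
  shows "regular t"
proof -
  have surj: "\<And>f. sq_int D f \<Longrightarrow>
      \<exists>u. sq_int D u \<and> (AE x in lebesgue. x \<in> D \<longrightarrow> Jop J U u x - t * u x = f x)"
    and inj: "\<And>u. sq_int D u \<Longrightarrow> (AE x in lebesgue. x \<in> D \<longrightarrow> Jop J U u x = t * u x) \<Longrightarrow>
      (AE x in lebesgue. x \<in> D \<longrightarrow> u x = 0)"
    using assms unfolding in_spectrum_def by blast+
  have "\<exists>w. in_L2 D w \<and> (AE x in lebesgue. shift t w x = f x)" if f: "in_L2 D f" for f
  proof -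
    obtain u where u: "sq_int D u" "AE x in lebesgue. x \<in> D \<longrightarrow> Jop J U u x - t * u x = f x"
      using surj[OF in_L2_imp_sq_int[OF f]] by blast
    define w where "w x = indicator D x * u x" for x
    have "AE x in lebesgue. shift t w x = f x"
      using u(2)
    proof eventually_elim
      case (elim x)
      show ?case
      proof (cases "x \<in> D")
        case True
        then show ?thesis using elim by (simp add: shift_def w_def[abs_def] JU_indicator_D Jop_eq_JU)
      next
        case False
        then have "x \<notin> U" using U_subset by blast
        then show ?thesis using False in_L2_outside[OF f False] by (simp add: shift_def w_def JU_outside)
      qed
    qed
    then show ?thesis using sq_int_imp_in_L2[OF u(1)] unfolding w_def by blast
  qed
  moreover have "AE x in lebesgue. w x = 0"
    if w: "in_L2 D w" and eigen: "AE x in lebesgue. JU w x = t * w x" for w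
  proof -
    have "AE x in lebesgue. x \<in> D \<longrightarrow> Jop J U w x = t * w x"
      using eigen by eventually_elim (simp add: Jop_eq_JU)
    then have "AE x in lebesgue. x \<in> D \<longrightarrow> w x = 0"
      by (rule inj[OF in_L2_imp_sq_int[OF w]])
    then show ?thesis using in_L2_outside[OF w] by auto
  qed
  ultimately show ?thesis unfolding regular_def by blast
qed

lemma in_spectrum_0:
  assumes v: "in_L2 D v" "L2_sqnorm v > 0"
  shows "in_spectrum J U D 0"
proof (cases "U = {}")
  case True
  have "Jop J U v x = 0 * v x" for x using True by (simp add: Jop_def)
  moreover have "\<not> (AE x in lebesgue. x \<in> D \<longrightarrow> v x = 0)"
  proof
    assume "AE x in lebesgue. x \<in> D \<longrightarrow> v x = 0"
    then have "AE x in lebesgue. v x = 0" using in_L2_outside[OF v(1)] by auto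
    then show False using v(2) L2_sqnorm_eq_0_iff[OF v(1)] by simp
  qed
  ultimately show ?thesis
    unfolding in_spectrum_def using in_L2_imp_sq_int[OF v(1)] by blast
next
  case False
  \<comment> \<open>\<open>J\<^sub>U u\<close> is bounded for every \<open>u\<close>, so \<open>J\<^sub>U\<close> misses the functions that are
    essentially unbounded on \<open>U\<close>.\<close>
  obtain f where f: "in_L2 D f" and unbounded: "\<And>M. \<not> (AE x in lebesgue. x \<in> U \<longrightarrow> f x \<le> M)"
    using in_L2_essentially_unbounded_on_open[OF open_U False U_subset] by blast
  have "\<not> (\<exists>u. sq_int D u \<and> (AE x in lebesgue. x \<in> D \<longrightarrow> Jop J U u x - 0 * u x = f x))"
  proof
    assume "\<exists>u. sq_int D u \<and> (AE x in lebesgue. x \<in> D \<longrightarrow> Jop J U u x - 0 * u x = f x)"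
    then obtain u where u: "sq_int D u" "AE x in lebesgue. x \<in> D \<longrightarrow> JU u x = f x"
      by (auto simp: Jop_eq_JU)
    define M where "M = J 0 * L1_norm (\<lambda>x. indicator D x * u x)"
    have bound: "JU u x \<le> M" for x
      using JU_bound[OF sq_int_imp_in_L2[OF u(1)], of x] unfolding M_def JU_indicator_D by simp
    have "AE x in lebesgue. x \<in> U \<longrightarrow> f x \<le> M"
      using u(2)
    proof eventually_elim
      case (elim x)
      then show ?case using bound[of x] U_subset by auto
    qed
    then show False using unbounded by blast
  qed
  then show ?thesis unfolding in_spectrum_def using in_L2_imp_sq_int[OF f] by blast
qed

lemma in_spectrum_near_approximate_eigenvalue:
  assumes v: "in_L2 D v" "L2_sqnorm v > 0" and r: "r > 0"
    and approx: "L2_sqnorm (shift \<mu> v) < r\<^sup>2 * L2_sqnorm v"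
  shows "\<exists>t. \<bar>t - \<mu>\<bar> < r \<and> in_spectrum J U D t"
proof (rule ccontr)
  assume "\<nexists>t. \<bar>t - \<mu>\<bar> < r \<and> in_spectrum J U D t"
  then have "regular t \<and> bounded_below t" if "\<bar>t - \<mu>\<bar> < r" for t
    using that regular_if_not_in_spectrum bounded_below_if_regular in_spectrum_0[OF v] by metis
  then have "r\<^sup>2 * L2_sqnorm v \<le> L2_sqnorm (shift \<mu> v)"
    by (rule sqnorm_shift_ge_if_regular_interval[OF r _ v(1)])
  then show False using approx by simp
qed

lemma L2_eigenfunction_if_is_eigenvalue:
  assumes "is_eigenvalue J U D \<mu>"
  obtains v where "in_L2 D v" "L2_sqnorm v > 0" "AE x in lebesgue. shift \<mu> v x = 0"
proof -
  obtain u where u: "sq_int D u" "\<not> (AE x in lebesgue. x \<in> D \<longrightarrow> u x = 0)"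
    "AE x in lebesgue. x \<in> D \<longrightarrow> Jop J U u x = \<mu> * u x"
    using assms unfolding is_eigenvalue_def by blast
  define v where "v x = indicator D x * u x" for x
  have v: "in_L2 D v" unfolding v_def by (rule sq_int_imp_in_L2[OF u(1)])
  have "L2_sqnorm v \<noteq> 0"
  proof
    assume "L2_sqnorm v = 0"
    then have "AE x in lebesgue. v x = 0" using L2_sqnorm_eq_0_iff[OF v] by simp
    then have "AE x in lebesgue. x \<in> D \<longrightarrow> u x = 0" by eventually_elim (simp add: v_def indicator_def)
    then show False using u(2) by blast
  qed
  then have "L2_sqnorm v > 0" using L2_sqnorm_nonneg[of v] by linarith
  moreover have "AE x in lebesgue. shift \<mu> v x = 0"
    using u(3)
  proof eventually_elim
    case (elim x)
    show ?case
    proof (cases "x \<in> D")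
      case True
      then show ?thesis using elim by (simp add: shift_def v_def[abs_def] JU_indicator_D Jop_eq_JU)
    next
      case False
      then have "x \<notin> U" using U_subset by blast
      with False show ?thesis by (simp add: shift_def v_def JU_outside)
    qed
  qed
  ultimately show ?thesis using that v by blast
qed

end

section \<open>Perturbation of the domain\<close>

context bounded_domain
begin

lemma
  assumes A: "A \<subseteq> D" "A \<in> sets lebesgue" and B: "B \<subseteq> D" "B \<in> sets lebesgue"
  shows in_L2_indicator_symdiff: "in_L2 D (\<lambda>x. \<bar>indicator A x - indicator B x\<bar>)"
    and L2_sqnorm_indicator_symdiff:
      "L2_sqnorm (\<lambda>x. \<bar>indicator A x - indicator B x\<bar>) = measure lebesgue (A - B) + measure lebesgue (B - A)"
proof -
  note [measurable] = A(2) B(2)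
  show "in_L2 D (\<lambda>x. \<bar>indicator A x - indicator B x\<bar>)"
    by (rule in_L2_if_bounded[of _ 1]) (use A(1) B(1) in \<open>auto simp: indicator_def\<close>)
  have "emeasure lebesgue (A - B) < \<infinity>" "emeasure lebesgue (B - A) < \<infinity>"
    using bounded_set_imp_lmeasurable[of "A - B"] bounded_set_imp_lmeasurable[of "B - A"]
      bounded_subset[OF bounded_D] A(1) B(1) by (auto simp: fmeasurable_def)
  then have "integrable lebesgue (indicator (A - B) :: 'a \<Rightarrow> real)"
    "integrable lebesgue (indicator (B - A) :: 'a \<Rightarrow> real)"
    by auto
  moreover have "L2_sqnorm (\<lambda>x. \<bar>indicator A x - indicator B x\<bar>)
      = (\<integral>x. indicator (A - B) x + indicator (B - A) x \<partial>lebesgue)"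
    unfolding L2_inner_def by (intro Bochner_Integration.integral_cong) (auto simp: indicator_def)
  ultimately show "L2_sqnorm (\<lambda>x. \<bar>indicator A x - indicator B x\<bar>)
      = measure lebesgue (A - B) + measure lebesgue (B - A)"
    by simp
qed

end

context kernel_operator
begin

lemma J_conv_domain_diff_bound:
  assumes B: "kernel_operator D J B" and u: "in_L2 D u"
  shows "\<bar>J_conv u x - kernel_operator.J_conv J B u x\<bar>
    \<le> J 0 * sqrt ((measure lebesgue (U - B) + measure lebesgue (B - U)) * L2_sqnorm u)"
proof -
  interpret B: kernel_operator D J B by (rule B)
  define h :: "'a \<Rightarrow> real" where "h y = \<bar>indicator U y - indicator B y\<bar>" for y
  have h: "in_L2 D h" "L2_sqnorm h = measure lebesgue (U - B) + measure lebesgue (B - U)"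
    unfolding h_def using U_subset B.U_subset
    by (intro in_L2_indicator_symdiff L2_sqnorm_indicator_symdiff; simp)+
  let ?f = "\<lambda>y. (indicator U y - indicator B y) * (J (x - y) * u y)"
  have int: "integrable lebesgue ?f"
    using Bochner_Integration.integrable_diff[OF integrable_J_conv_integrand[OF u, of x]
        B.integrable_J_conv_integrand[OF u, of x]]
    by (simp add: algebra_simps)
  have "J_conv u x - B.J_conv u x = (\<integral>y. ?f y \<partial>lebesgue)"
    unfolding J_conv_def B.J_conv_def
    using integrable_J_conv_integrand[OF u, of x] B.integrable_J_conv_integrand[OF u, of x]
    by (subst Bochner_Integration.integral_diff[symmetric]) (auto simp: algebra_simps)
  also have "\<bar>\<dots>\<bar> \<le> (\<integral>y. norm (?f y) \<partial>lebesgue)"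
    using Bochner_Integration.integral_norm_bound[of lebesgue ?f] by simp
  also have "\<dots> \<le> (\<integral>y. J 0 * (h y * \<bar>u y\<bar>) \<partial>lebesgue)"
  proof (rule integral_mono)
    show "integrable lebesgue (\<lambda>y. J 0 * (h y * \<bar>u y\<bar>))"
      using in_L2_integrable_mult[OF h(1) in_L2_abs[OF u]] by simp
    have "\<bar>J (x - y)\<bar> * (h y * \<bar>u y\<bar>) \<le> J 0 * (h y * \<bar>u y\<bar>)" for y
      using abs_J_le_J0[of "x - y"] by (rule mult_right_mono) (simp add: h_def)
    then show "norm (?f y) \<le> J 0 * (h y * \<bar>u y\<bar>)" for y
      unfolding h_def by (simp add: abs_mult mult_ac)
  qed (use int in simp)
  also have "\<dots> = J 0 * L2_inner h (\<lambda>y. \<bar>u y\<bar>)" unfolding L2_inner_def by simp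
  also have "\<dots> \<le> J 0 * sqrt ((measure lebesgue (U - B) + measure lebesgue (B - U)) * L2_sqnorm u)"
  proof (rule mult_left_mono[OF _ J_nonneg])
    have "\<bar>L2_inner h (\<lambda>y. \<bar>u y\<bar>)\<bar>\<^sup>2 \<le> L2_sqnorm h * L2_sqnorm u"
      using L2_Cauchy_Schwarz[OF h(1) in_L2_abs[OF u]] by (simp add: L2_sqnorm_abs)
    then show "L2_inner h (\<lambda>y. \<bar>u y\<bar>)
        \<le> sqrt ((measure lebesgue (U - B) + measure lebesgue (B - U)) * L2_sqnorm u)"
      unfolding h(2) using real_le_rsqrt by fastforce
  qed
  finally show ?thesis .
qed

lemma JU_domain_diff_square_le:
  assumes B: "kernel_operator D J B" and u: "in_L2 D u"
  shows "(JU u x - kernel_operator.JU J B u x)\<^sup>2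
    \<le> 2 * (J 0 * sqrt ((measure lebesgue (U - B) + measure lebesgue (B - U)) * L2_sqnorm u))\<^sup>2
        * indicator D x
      + 2 * (J 0 * L1_norm u)\<^sup>2 * \<bar>indicator U x - indicator B x\<bar>\<^sup>2"
proof -
  interpret B: kernel_operator D J B by (rule B)
  have "JU u x - B.JU u x = indicator U x * (J_conv u x - B.J_conv u x)
      + (indicator U x - indicator B x) * B.J_conv u x"
    unfolding JU_def B.JU_def by (simp add: algebra_simps)
  then have "(JU u x - B.JU u x)\<^sup>2 \<le> 2 * (indicator U x * (J_conv u x - B.J_conv u x))\<^sup>2
      + 2 * ((indicator U x - indicator B x) * B.J_conv u x)\<^sup>2"
    using square_add_le by simp
  also have "(indicator U x * (J_conv u x - B.J_conv u x))\<^sup>2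
      \<le> (J 0 * sqrt ((measure lebesgue (U - B) + measure lebesgue (B - U)) * L2_sqnorm u))\<^sup>2
        * indicator D x"
  proof -
    have "\<bar>J_conv u x - B.J_conv u x\<bar>\<^sup>2
        \<le> (J 0 * sqrt ((measure lebesgue (U - B) + measure lebesgue (B - U)) * L2_sqnorm u))\<^sup>2"
      by (rule power_mono[OF J_conv_domain_diff_bound[OF B u] abs_ge_zero])
    then show ?thesis using U_subset by (auto simp: indicator_def)
  qed
  also have "((indicator U x - indicator B x) * B.J_conv u x)\<^sup>2
      \<le> (J 0 * L1_norm u)\<^sup>2 * \<bar>indicator U x - indicator B x\<bar>\<^sup>2"
  proof -
    have "((indicator U x - indicator B x) * B.J_conv u x)\<^sup>2
        = \<bar>indicator U x - indicator B x\<bar>\<^sup>2 * \<bar>B.J_conv u x\<bar>\<^sup>2"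
      by (simp add: power_mult_distrib)
    also have "\<dots> \<le> \<bar>indicator U x - indicator B x\<bar>\<^sup>2 * (J 0 * L1_norm u)\<^sup>2"
      by (intro mult_left_mono power_mono B.J_conv_bound[OF u]) auto
    finally show ?thesis by (simp only: mult.commute)
  qed
  finally show ?thesis by (simp add: mult_ac)
qed

lemma L2_sqnorm_JU_domain_diff_le:
  assumes B: "kernel_operator D J B" and u: "in_L2 D u"
  shows "L2_sqnorm (\<lambda>x. JU u x - kernel_operator.JU J B u x)
    \<le> 2 * (J 0)\<^sup>2 * (L2_sqnorm u * measure lebesgue D + (L1_norm u)\<^sup>2)
      * (measure lebesgue (U - B) + measure lebesgue (B - U))"
proof -
  interpret B: kernel_operator D J B by (rule B)
  define \<delta> where "\<delta> = measure lebesgue (U - B) + measure lebesgue (B - U)"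
  define h :: "'a \<Rightarrow> real" where "h y = \<bar>indicator U y - indicator B y\<bar>" for y
  have h: "in_L2 D h" "L2_sqnorm h = \<delta>"
    unfolding h_def \<delta>_def using U_subset B.U_subset
    by (intro in_L2_indicator_symdiff L2_sqnorm_indicator_symdiff; simp)+
  define a where "a = J 0 * sqrt (\<delta> * L2_sqnorm u)"
  define b where "b = J 0 * L1_norm u"
  have "L2_sqnorm (\<lambda>x. JU u x - B.JU u x) = (\<integral>x. (JU u x - B.JU u x)\<^sup>2 \<partial>lebesgue)"
    unfolding L2_inner_def by (simp add: power2_eq_square)
  also have "\<dots> \<le> (\<integral>x. 2 * a\<^sup>2 * indicator D x + 2 * b\<^sup>2 * (h x)\<^sup>2 \<partial>lebesgue)"
    using in_L2_integrable_square[OF in_L2_diff[OF in_L2_JU[OF u] B.in_L2_JU[OF u]]]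
      integrable_indicator_D in_L2_integrable_square[OF h(1)]
      JU_domain_diff_square_le[OF B u]
    by (intro integral_mono) (auto simp: a_def b_def \<delta>_def h_def)
  also have "\<dots> = 2 * a\<^sup>2 * measure lebesgue D + 2 * b\<^sup>2 * \<delta>"
    using integrable_indicator_D in_L2_integrable_square[OF h(1)] h(2)
    by (simp add: L2_inner_def power2_eq_square)
  also have "\<dots> = 2 * (J 0)\<^sup>2 * (L2_sqnorm u * measure lebesgue D + (L1_norm u)\<^sup>2) * \<delta>"
    unfolding a_def b_def using L2_sqnorm_nonneg[of u] measure_nonneg[of lebesgue "U - B"]
      measure_nonneg[of lebesgue "B - U"]
    by (simp add: \<delta>_def power_mult_distrib real_sqrt_mult algebra_simps)
  finally show ?thesis unfolding \<delta>_def .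
qed
end

theorem lemma3p6:
  fixes J :: "'a::euclidean_space \<Rightarrow> real"
    and D \<Omega> :: "'a set" and \<Omega>n :: "nat \<Rightarrow> 'a set" and \<mu> :: real
  assumes J_cont: "continuous_on UNIV J"
    and J_nonneg: "\<And>x. J x \<ge> 0"
    and J_sym: "\<And>x y. norm x = norm y \<Longrightarrow> J x = J y"
    and J_decr: "\<And>x y. norm x \<le> norm y \<Longrightarrow> J y \<le> J x"
    and J0: "J 0 > 0"
    and J_int: "integrable lebesgue J" "integral\<^sup>L lebesgue J = 1"
    and D: "bounded D" "D \<in> sets lebesgue"
    and Om: "open \<Omega>" "bounded \<Omega>" "\<Omega> \<subseteq> D"
    and Omn: "\<And>n. open (\<Omega>n n)" "\<And>n. bounded (\<Omega>n n)" "\<And>n. \<Omega>n n \<subseteq> D"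
    and conv: "(\<lambda>n. measure lebesgue (\<Omega> - \<Omega>n n) + measure lebesgue (\<Omega>n n - \<Omega>)) \<longlonglongrightarrow> 0"
    and eig: "is_eigenvalue J \<Omega> D \<mu>"
  shows "\<exists>\<mu>n :: nat \<Rightarrow> real. (\<forall>n. in_spectrum J (\<Omega>n n) D (\<mu>n n)) \<and> \<mu>n \<longlonglongrightarrow> \<mu>"
proof -
  have kernel: "kernel_operator D J V" if "open V" "V \<subseteq> D" for V
    using that D J_cont J_nonneg J_decr[of 0] J_sym[of "- x" x for x]
    by unfold_locales auto
  interpret \<Omega>: kernel_operator D J \<Omega> using kernel Om by blast
  obtain v where v: "in_L2 D v" "L2_sqnorm v > 0" "AE x in lebesgue. \<Omega>.shift \<mu> v x = 0"
    using \<Omega>.L2_eigenfunction_if_is_eigenvalue[OF eig] by blast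
  define \<delta> where "\<delta> n = measure lebesgue (\<Omega> - \<Omega>n n) + measure lebesgue (\<Omega>n n - \<Omega>)" for n
  define K where "K = 2 * (J 0)\<^sup>2 * (L2_sqnorm v * measure lebesgue D + (L1_norm v)\<^sup>2)"
  have "\<exists>t. \<bar>t - \<mu>\<bar> < r \<and> in_spectrum J (\<Omega>n n) D t" if r: "sqrt (K * \<delta> n / L2_sqnorm v) < r" "0 < r" for n r
  proof -
    interpret \<Omega>n: kernel_operator D J "\<Omega>n n" using kernel Omn by blast
    have "L2_sqnorm (\<Omega>n.shift \<mu> v) = L2_sqnorm (\<lambda>x. \<Omega>n.JU v x - \<Omega>.JU v x)"
      using v(3) by (intro L2_sqnorm_cong_AE[where D = D] \<Omega>n.in_L2_shift in_L2_diff \<Omega>n.in_L2_JU \<Omega>.in_L2_JU v(1))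
        (auto elim!: eventually_mono simp: \<Omega>n.shift_def \<Omega>.shift_def)
    also have "\<dots> \<le> K * \<delta> n"
      using \<Omega>n.L2_sqnorm_JU_domain_diff_le[OF kernel[OF Om(1,3)] v(1)] by (simp add: K_def \<delta>_def add.commute)
    also have "\<dots> < r\<^sup>2 * L2_sqnorm v"
      using real_sqrt_less_iff[of "K * \<delta> n / L2_sqnorm v" "r\<^sup>2"] r v(2) by (simp add: divide_less_eq)
    finally show ?thesis by (rule \<Omega>n.in_spectrum_near_approximate_eigenvalue[OF v(1,2) r(2)])
  qed
  moreover have "(\<lambda>n. sqrt (K * \<delta> n / L2_sqnorm v)) \<longlonglongrightarrow> sqrt (K * 0 / L2_sqnorm v)"
    using conv v(2) unfolding \<delta>_def by (intro tendsto_intros) auto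
  ultimately show ?thesis by (intro convergent_selection) simp_all
qed

end
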